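(* Let $X, Y \subseteq \omega$. There exists an embedding $\mathcal{B}^X \hookrightarrow \mathcal{G}^Y$ if and only if $X \oplus \overline{X} \le_e Y$.
   Context: A pca is a set with a partial binary application operation containing distinct $\mathrm{s},\mathrm{k}$ with $\mathrm{k}ab\downarrow=a$, $\mathrm{s}ab\downarrow$, $\mathrm{s}abc\simeq(ac)(bc)$. An embedding of pcas is an injective map $f$ with: if $ab$ is defined then $f(a)f(b)$ is defined and equals $f(ab)$. $\mathcal{B}^X$: elements are the partial $X$-computable functions $\omega\rightharpoonup\omega$; application $\varphi\cdot\psi$ is the partial function $n\mapsto\Phi^{\varphi\oplus\psi}_{\varphi(0)}(n)$, where $\Phi_e$ is the $e$-th Turing functional, $(\varphi\oplus\psi)(2n)\simeq\varphi(n)$, $(\varphi\oplus\psi)(2n+1)\simeq\psi(n)$, and querying the oracle at an undefined point diverges. Scott's graph model: on $\mathcal{P}(\omega)$, $A\cdot B=\{n:\exists u\,(\langle n,u\rangle\in A\wedge D_u\subseteq B)\}$, with $\langle\cdot,\cdot\rangle$ a bijective computable pairing, $\langle 0,0\rangle=0$, and $D_u$ the finite set with canonical code $u$. $\mathcal{G}^Y$ is the least class containing $Y$ and all c.e. sets and closed under this application (equivalently, all sets $\le_e Y$). $A\le_e Y$ (enumeration reducibility) means there is a c.e. relation $R$ with $x\in A \iff \exists u\,(R(x,u)\wedge D_u\subseteq Y)$. $X\oplus\overline X=\{2n:n\in X\}\cup\{2n+1:n\notin X\}$. *)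

theory Defs
  imports Main "HOL-Library.Nat_Bijection"
begin

definition arg :: "nat \<Rightarrow> nat list \<Rightarrow> nat" where
  "arg i xs = (if i < length xs then xs ! i else 0)"

text \<open>Program codes e, with r = e mod 7 and d = e div 7:
  r=0 zero; r=1 successor of first argument; r=2 projection onto argument d;
  r=3 composition, (p, qs) = prod_decode d, qs = list_decode of second component;
  r=4 primitive recursion on first argument, (p, q) = prod_decode d;
  r=5 minimisation of program d; r=6 oracle query at first argument.
  A query to the oracle at an undefined point diverges.
  ev f e xs y: program e with oracle f on input xs converges with output y.\<close>
inductive ev :: "(nat \<Rightarrow> nat option) \<Rightarrow> nat \<Rightarrow> nat list \<Rightarrow> nat \<Rightarrow> bool"
  for f :: "nat \<Rightarrow> nat option" where
  ev_zero: "e mod 7 = 0 \<Longrightarrow> ev f e xs 0"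
| ev_suc: "e mod 7 = 1 \<Longrightarrow> ev f e xs (Suc (arg 0 xs))"
| ev_proj: "e mod 7 = 2 \<Longrightarrow> ev f e xs (arg (e div 7) xs)"
| ev_comp: "e mod 7 = 3 \<Longrightarrow> prod_decode (e div 7) = (p, qc) \<Longrightarrow>
     list_all2 (\<lambda>q y. ev f q xs y) (list_decode qc) ys \<Longrightarrow> ev f p ys z \<Longrightarrow> ev f e xs z"
| ev_pr0: "e mod 7 = 4 \<Longrightarrow> prod_decode (e div 7) = (p, q) \<Longrightarrow>
     ev f p xs y \<Longrightarrow> ev f e (0 # xs) y"
| ev_prS: "e mod 7 = 4 \<Longrightarrow> prod_decode (e div 7) = (p, q) \<Longrightarrow>
     ev f e (n # xs) y \<Longrightarrow> ev f q (n # y # xs) z \<Longrightarrow> ev f e (Suc n # xs) z"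
| ev_mu: "e mod 7 = 5 \<Longrightarrow> ev f (e div 7) (n # xs) 0 \<Longrightarrow>
     (\<forall>m<n. \<exists>y. y \<noteq> 0 \<and> ev f (e div 7) (m # xs) y) \<Longrightarrow> ev f e xs n"
| ev_oracle: "e mod 7 = 6 \<Longrightarrow> f (arg 0 xs) = Some y \<Longrightarrow> ev f e xs y"

definition Phi :: "(nat \<Rightarrow> nat option) \<Rightarrow> nat \<Rightarrow> nat \<Rightarrow> nat option" where
  "Phi f e n = (if \<exists>y. ev f e [n] y then Some (THE y. ev f e [n] y) else None)"

definition chi :: "nat set \<Rightarrow> nat \<Rightarrow> nat option" where
  "chi X n = Some (if n \<in> X then 1 else 0)"

definition pjoin :: "(nat \<Rightarrow> nat option) \<Rightarrow> (nat \<Rightarrow> nat option) \<Rightarrow> nat \<Rightarrow> nat option" where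
  "pjoin \<phi> \<psi> n = (if even n then \<phi> (n div 2) else \<psi> (n div 2))"

definition ce :: "nat set \<Rightarrow> bool" where
  "ce A \<longleftrightarrow> (\<exists>e. A = {n. Phi (chi {}) e n \<noteq> None})"

definition ce_rel :: "(nat \<Rightarrow> nat \<Rightarrow> bool) \<Rightarrow> bool" where
  "ce_rel R \<longleftrightarrow> ce {prod_encode (x, u) | x u. R x u}"

definition pca_embedding ::
  "'a set \<Rightarrow> ('a \<Rightarrow> 'a \<Rightarrow> 'a option) \<Rightarrow> 'b set \<Rightarrow> ('b \<Rightarrow> 'b \<Rightarrow> 'b option) \<Rightarrow> ('a \<Rightarrow> 'b) \<Rightarrow> bool"
where
  "pca_embedding A appA B appB f \<longleftrightarrow>
     f ` A \<subseteq> B \<and> inj_on f A \<and>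
     (\<forall>a\<in>A. \<forall>b\<in>A. \<forall>c. appA a b = Some c \<longrightarrow> appB (f a) (f b) = Some (f c))"

definition Bcarrier :: "nat set \<Rightarrow> (nat \<Rightarrow> nat option) set" where
  "Bcarrier X = {\<phi>. \<exists>e. \<phi> = Phi (chi X) e}"

definition Bapp :: "(nat \<Rightarrow> nat option) \<Rightarrow> (nat \<Rightarrow> nat option) \<Rightarrow> (nat \<Rightarrow> nat option) option" where
  "Bapp \<phi> \<psi> = Some (\<lambda>n. case \<phi> 0 of None \<Rightarrow> None | Some e \<Rightarrow> Phi (pjoin \<phi> \<psi>) e n)"

text \<open>D u: the finite set with canonical code u.\<close>
definition D :: "nat \<Rightarrow> nat set" where
  "D u = {i. odd (u div 2 ^ i)}"

definition gapp :: "nat set \<Rightarrow> nat set \<Rightarrow> nat set" where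
  "gapp A B = {n. \<exists>u. prod_encode (n, u) \<in> A \<and> D u \<subseteq> B}"

definition Gapp :: "nat set \<Rightarrow> nat set \<Rightarrow> nat set option" where
  "Gapp A B = Some (gapp A B)"

inductive_set Gcarrier :: "nat set \<Rightarrow> nat set set" for Y :: "nat set" where
  G_base: "Y \<in> Gcarrier Y"
| G_ce: "ce A \<Longrightarrow> A \<in> Gcarrier Y"
| G_app: "A \<in> Gcarrier Y \<Longrightarrow> B \<in> Gcarrier Y \<Longrightarrow> gapp A B \<in> Gcarrier Y"

definition le_e :: "nat set \<Rightarrow> nat set \<Rightarrow> bool" where
  "le_e A Y \<longleftrightarrow> (\<exists>R. ce_rel R \<and> (\<forall>x. x \<in> A \<longleftrightarrow> (\<exists>u. R x u \<and> D u \<subseteq> Y)))"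

definition join_compl :: "nat set \<Rightarrow> nat set" where
  "join_compl X = {2 * n | n. n \<in> X} \<union> {2 * n + 1 | n. n \<notin> X}"

end

theory Submission
  imports Defs
begin

text \<open>If join_compl X \<le>e Y, send an X-computable \<phi> to the set emb \<phi> coding the graph of \<phi> and,
  recursively, of all applications of \<phi> to finite tables. Since application in B^X is continuous,
  application in the graph model then matches application in B^X; and emb \<phi> is generated by an
  inductive system on codes whose only axioms answer oracle queries to X, so it is enumeration
  reducible to join_compl X and hence lies in G^Y, which consists exactly of the sets \<le>e Y.

  Conversely, for any embedding f every f a is \<le>e Y and application in the graph model is an
  enumeration operator. The numerals of B^X are iterates of one successor application, and one
  X-computable element sends the numeral n to the constant chi_fun X n; some m separates the images
  of the constants 1 and 0, so membership of m in the images of these applications decides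
  n \<in> X uniformly in n. This gives X \<le>e Y and -X \<le>e Y.\<close>

section \<open>Oracle computations\<close>

lemma list_all2_det:
  "list_all2 (\<lambda>q y. P q y \<and> (\<forall>y'. Q q y' \<longrightarrow> y = y')) qs ys \<Longrightarrow> list_all2 Q qs ys' \<Longrightarrow> ys = ys'"
  by (induction qs arbitrary: ys ys') (auto simp: list_all2_Cons1)

lemma ev_det: "ev f e xs y \<Longrightarrow> ev f e xs y' \<Longrightarrow> y = y'"
proof (induction arbitrary: y' rule: ev.induct)
  case (ev_zero e xs)
  from ev_zero.prems show ?case by cases (use ev_zero.hyps in simp_all)
next
  case (ev_suc e xs)
  from ev_suc.prems show ?case by cases (use ev_suc.hyps in simp_all)
next
  case (ev_proj e xs)
  from ev_proj.prems show ?case by cases (use ev_proj.hyps in simp_all)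
next
  case (ev_comp e p qc xs ys z)
  from ev_comp.prems show ?case
  proof cases
    case (ev_comp p' qc' ys')
    then have "p' = p" "qc' = qc" using ev_comp.hyps by simp_all
    then have "ys' = ys" using list_all2_det[OF ev_comp.IH(1)] ev_comp by simp
    then show ?thesis using ev_comp ev_comp.IH(2) \<open>p' = p\<close> by simp
  qed (use ev_comp.hyps in simp_all)
next
  case (ev_pr0 e p q xs y)
  from ev_pr0.prems show ?case
  proof cases
    case (ev_pr0 p' q')
    then show ?thesis using ev_pr0.hyps ev_pr0.IH by simp
  qed (use ev_pr0.hyps in simp_all)
next
  case (ev_prS e p q n xs y z)
  from ev_prS.prems show ?case
  proof cases
    case (ev_prS p' q' y2)
    then have "p' = p" "q' = q" using ev_prS.hyps by simp_all
    then have "y2 = y" using ev_prS ev_prS.IH(1) by simp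
    then show ?thesis using ev_prS ev_prS.IH(2) \<open>q' = q\<close> by simp
  qed (use ev_prS.hyps in simp_all)
next
  case (ev_mu e n xs)
  from ev_mu.prems show ?case
  proof cases
    case ev_mu
    show ?thesis
    proof (rule linorder_cases[of n y'])
      assume "n < y'"
      then obtain z where "z \<noteq> 0" "ev f (e div 7) (n # xs) z" using ev_mu by blast
      then show ?thesis using ev_mu.IH(1) by blast
    next
      assume "y' < n"
      then obtain z where "z \<noteq> 0" "ev f (e div 7) (y' # xs) z"
        "\<forall>z'. ev f (e div 7) (y' # xs) z' \<longrightarrow> z = z'"
        using ev_mu.IH(2) by blast
      then show ?thesis using ev_mu by blast
    qed
  qed (use ev_mu.hyps in simp_all)
next
  case (ev_oracle e xs y)
  from ev_oracle.prems show ?case by cases (use ev_oracle.hyps in simp_all)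
qed

lemma Phi_Some: "Phi f e n = Some y \<longleftrightarrow> ev f e [n] y"
proof
  assume "Phi f e n = Some y"
  then show "ev f e [n] y" unfolding Phi_def
    by (auto split: if_splits intro: theI ev_det)
next
  assume "ev f e [n] y"
  then show "Phi f e n = Some y" unfolding Phi_def using ev_det
    by (metis (mono_tags, lifting) the_equality)
qed

lemma ev_mono: "ev f e xs y \<Longrightarrow> f \<subseteq>\<^sub>m g \<Longrightarrow> ev g e xs y"
proof (induction rule: ev.induct)
  case (ev_zero e xs) show ?case by (rule ev.ev_zero[OF ev_zero.hyps])
next
  case (ev_suc e xs) show ?case by (rule ev.ev_suc[OF ev_suc.hyps])
next
  case (ev_proj e xs) show ?case by (rule ev.ev_proj[OF ev_proj.hyps])
next
  case (ev_comp e p qc xs ys z)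
  have "list_all2 (\<lambda>q y. ev g q xs y) (list_decode qc) ys"
    using ev_comp.IH(1) ev_comp.prems by (auto elim: list_all2_mono)
  then show ?case using ev_comp by - (rule ev.ev_comp[where p=p and qc=qc and ys=ys], auto)
next
  case (ev_pr0 e p q xs y) then show ?case by - (rule ev.ev_pr0[where p=p and q=q], auto)
next
  case (ev_prS e p q n xs y z) then show ?case by - (rule ev.ev_prS[where p=p and q=q and y=y], auto)
next
  case (ev_mu e n xs) then show ?case by - (rule ev.ev_mu, blast+)
next
  case (ev_oracle e xs y)
  then show ?case by - (rule ev.ev_oracle, auto simp: map_le_def dom_def)
qed

lemma ev_restrict_mono: "ev (g |` Q) e xs y \<Longrightarrow> Q \<subseteq> Q' \<Longrightarrow> ev (g |` Q') e xs y"
  by (erule ev_mono) (auto simp: map_le_def)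

lemma ev_finite_use_Union:
  assumes "finite I" and "\<forall>(e, xs, y)\<in>I. \<exists>Q. finite Q \<and> ev (g |` Q) e xs y"
  shows "\<exists>Q. finite Q \<and> (\<forall>(e, xs, y)\<in>I. ev (g |` Q) e xs y)"
proof -
  obtain QF where QF: "\<forall>(e, xs, y)\<in>I. finite (QF (e, xs, y)) \<and> ev (g |` QF (e, xs, y)) e xs y"
    using bchoice[OF assms(2)[unfolded case_prod_beta]] by (auto simp: case_prod_beta)
  have "\<forall>(e, xs, y)\<in>I. ev (g |` \<Union>(QF ` I)) e xs y"
    using QF by (auto elim!: ev_restrict_mono)
  moreover have "finite (\<Union>(QF ` I))" using QF \<open>finite I\<close> by auto
  ultimately show ?thesis by blast
qed

lemma ev_finite_use: "ev g e xs y \<Longrightarrow> \<exists>Q. finite Q \<and> ev (g |` Q) e xs y"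
proof (induction rule: ev.induct)
  case (ev_comp e p qc xs ys z)
  let ?I = "insert (p, ys, z) ((\<lambda>j. (list_decode qc ! j, xs, ys ! j)) ` {..<length ys})"
  have len: "length (list_decode qc) = length ys" using ev_comp.IH(1) by (rule list_all2_lengthD)
  have "\<forall>(e', xs', y')\<in>?I. \<exists>Q. finite Q \<and> ev (g |` Q) e' xs' y'"
    using ev_comp.IH len by (auto simp: list_all2_conv_all_nth)
  then obtain Q where Q: "finite Q" "\<forall>(e', xs', y')\<in>?I. ev (g |` Q) e' xs' y'"
    using ev_finite_use_Union[of ?I] by blast
  have "list_all2 (\<lambda>q y. ev (g |` Q) q xs y) (list_decode qc) ys"
    using Q(2) len by (auto simp: list_all2_conv_all_nth)
  moreover have "ev (g |` Q) p ys z" using Q(2) by auto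
  ultimately show ?case using Q(1) ev.ev_comp[OF ev_comp.hyps(1,2)] by blast
next
  case (ev_prS e p q n xs y z)
  then obtain Q where "finite Q" "ev (g |` Q) e (n # xs) y" "ev (g |` Q) q (n # y # xs) z"
    using ev_finite_use_Union[of "{(e, n # xs, y), (q, n # y # xs, z)}" g] by auto
  then show ?case using ev.ev_prS[OF ev_prS.hyps(1,2)] by blast
next
  case (ev_mu e n xs)
  obtain Y where Y: "\<forall>m<n. Y m \<noteq> 0 \<and> (\<exists>Q. finite Q \<and> ev (g |` Q) (e div 7) (m # xs) (Y m))"
    using ev_mu.IH(2) by metis
  let ?I = "insert (e div 7, n # xs, 0) ((\<lambda>m. (e div 7, m # xs, Y m)) ` {..<n})"
  obtain Q where Q: "finite Q" "\<forall>(e', xs', y')\<in>?I. ev (g |` Q) e' xs' y'"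
    using ev_finite_use_Union[of ?I g] ev_mu.IH(1) Y by auto
  then have "ev (g |` Q) e xs n" using Y ev_mu.hyps by - (rule ev.ev_mu, auto)
  then show ?case using Q(1) by blast
next
  case (ev_oracle e xs y)
  then have "ev (g |` {arg 0 xs}) e xs y" by - (rule ev.ev_oracle, auto)
  then show ?case by blast
next
  case (ev_pr0 e p q xs y)
  then obtain Q where "finite Q" "ev (g |` Q) p xs y" by blast
  then show ?case using ev.ev_pr0[OF ev_pr0.hyps(1,2)] by blast
next
  case (ev_zero e xs)
  show ?case using ev.ev_zero[OF ev_zero.hyps, of "g |` {}"] by blast
next
  case (ev_suc e xs)
  show ?case using ev.ev_suc[OF ev_suc.hyps, of "g |` {}"] by blast
next
  case (ev_proj e xs)
  show ?case using ev.ev_proj[OF ev_proj.hyps, of "g |` {}"] by blast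
qed

datatype prog = Z | Sc | Pj nat | Cm prog "prog list" | Rc prog prog | Orc

fun prog_code :: "prog \<Rightarrow> nat" where
  "prog_code Z = 0"
| "prog_code Sc = 1"
| "prog_code (Pj i) = 7 * i + 2"
| "prog_code (Cm f gs) = 7 * prod_encode (prog_code f, list_encode (map prog_code gs)) + 3"
| "prog_code (Rc g h) = 7 * prod_encode (prog_code g, prog_code h) + 4"
| "prog_code Orc = 6"

fun prog_eval :: "(nat \<Rightarrow> nat) \<Rightarrow> prog \<Rightarrow> nat list \<Rightarrow> nat" where
  "prog_eval og Z xs = 0"
| "prog_eval og Sc xs = Suc (arg 0 xs)"
| "prog_eval og (Pj i) xs = arg i xs"
| "prog_eval og (Cm f gs) xs = prog_eval og f (map (\<lambda>t. prog_eval og t xs) gs)"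
| "prog_eval og (Rc g h) xs = (case xs of [] \<Rightarrow> 0
     | n # ys \<Rightarrow> rec_nat (prog_eval og g ys) (\<lambda>i y. prog_eval og h (i # y # ys)) n)"
| "prog_eval og Orc xs = og (arg 0 xs)"

fun prog_wf :: "prog \<Rightarrow> nat \<Rightarrow> bool" where
  "prog_wf (Cm f gs) k = (prog_wf f (length gs) \<and> (\<forall>t\<in>set gs. prog_wf t k))"
| "prog_wf (Rc g h) k = (1 \<le> k \<and> prog_wf g (k - 1) \<and> prog_wf h (Suc (Suc (k - 1))))"
| "prog_wf _ k = True"

lemma list_all2_map_map: "(\<forall>t\<in>set gs. P (f t) (g t)) \<Longrightarrow> list_all2 P (map f gs) (map g gs)"
  by (induction gs) auto

lemma ev_prog_code:
  "prog_wf t (length xs) \<Longrightarrow> ev (\<lambda>a. Some (og a)) (prog_code t) xs (prog_eval og t xs)"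
proof (induction t arbitrary: xs)
  case Z then show ?case by (simp add: ev.ev_zero)
next
  case Sc then show ?case using ev.ev_suc[of 1] by simp
next
  case (Pj i)
  have "(7 * i + 2) mod 7 = 2" "(7 * i + 2) div 7 = i" by presburger+
  then show ?case using ev.ev_proj[of "7 * i + 2" "\<lambda>a. Some (og a)" xs]
    by (simp del: One_nat_def add_2_eq_Suc add_2_eq_Suc')
next
  case Orc then show ?case using ev.ev_oracle[of 6] by simp
next
  case (Cm f gs)
  have l: "list_all2 (\<lambda>q y. ev (\<lambda>a. Some (og a)) q xs y) (map prog_code gs)
    (map (\<lambda>t. prog_eval og t xs) gs)"
    using Cm by (intro list_all2_map_map) simp
  have "ev (\<lambda>a. Some (og a)) (prog_code f) (map (\<lambda>t. prog_eval og t xs) gs)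
    (prog_eval og f (map (\<lambda>t. prog_eval og t xs) gs))"
    using Cm by simp
  then show ?case
    by - (rule ev.ev_comp[where p="prog_code f" and qc="list_encode (map prog_code gs)"], use l in simp_all)
next
  case (Rc g h)
  then obtain n ys where xs: "xs = n # ys" by (cases xs) auto
  have g: "ev (\<lambda>a. Some (og a)) (prog_code g) ys (prog_eval og g ys)" using Rc xs by simp
  have "ev (\<lambda>a. Some (og a)) (prog_code (Rc g h)) (m # ys)
    (rec_nat (prog_eval og g ys) (\<lambda>i y. prog_eval og h (i # y # ys)) m)" for m
  proof (induction m)
    case 0
    show ?case by - (rule ev.ev_pr0[where p="prog_code g" and q="prog_code h"], use g in simp_all)
  next
    case (Suc m)
    let ?r = "rec_nat (prog_eval og g ys) (\<lambda>i y. prog_eval og h (i # y # ys)) m"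
    have "ev (\<lambda>a. Some (og a)) (prog_code h) (m # ?r # ys) (prog_eval og h (m # ?r # ys))"
      using Rc xs by simp
    then show ?case by - (rule ev.ev_prS[where p="prog_code g" and q="prog_code h"], use Suc in simp_all)
  qed
  then show ?case using xs by simp
qed

lemma Phi_prog_code:
  assumes "prog_wf t 1"
  shows "Phi (\<lambda>a. Some (og a)) (prog_code t) = (\<lambda>n. Some (prog_eval og t [n]))"
proof
  fix n
  have "ev (\<lambda>a. Some (og a)) (prog_code t) [n] (prog_eval og t [n])"
    using ev_prog_code[of t "[n]"] assms by simp
  then show "Phi (\<lambda>a. Some (og a)) (prog_code t) n = Some (prog_eval og t [n])"
    unfolding Phi_def using ev_det by (metis (mono_tags, lifting) the_equality)
qed

lemma arg_simps[simp]: "arg 0 (x # xs) = x" "arg (Suc i) (x # xs) = arg i xs" "arg i [] = 0"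
  "arg (numeral k) (x # xs) = arg (pred_numeral k) xs"
  by (simp_all add: arg_def numeral_eq_Suc)

fun const_prog :: "nat \<Rightarrow> prog" where
  "const_prog 0 = Z" | "const_prog (Suc c) = Cm Sc [const_prog c]"

lemma prog_wf_const_prog[simp]: "prog_wf (const_prog c) k" by (induction c) auto
lemma eval_const_prog[simp]: "prog_eval og (const_prog c) xs = c" by (induction c) auto

definition "add_prog = Rc (Pj 0) (Cm Sc [Pj 1])"
definition "pred_prog = Rc Z (Pj 0)"
definition "diff_prog = Cm (Rc (Pj 0) (Cm pred_prog [Pj 1])) [Pj 1, Pj 0]"
definition "mult_prog = Rc Z (Cm add_prog [Pj 1, Pj 2])"
definition "triangle_prog = Rc Z (Cm add_prog [Pj 1, Cm Sc [Pj 0]])"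
definition "prod_encode_prog = Cm add_prog [Cm triangle_prog [Cm add_prog [Pj 0, Pj 1]], Pj 0]"
definition "le_prog = Cm diff_prog [const_prog 1, Cm diff_prog [Pj 0, Pj 1]]"
definition "triangle_root_prog = Rc Z (Cm add_prog
  [Pj 1, Cm le_prog [Cm triangle_prog [Cm Sc [Pj 1]], Cm Sc [Pj 0]]])"
definition "fst_prog = Cm diff_prog [Pj 0, Cm triangle_prog [triangle_root_prog]]"
definition "snd_prog = Cm diff_prog [triangle_root_prog, fst_prog]"

lemma prog_wf_arith[simp]:
  "prog_wf add_prog (Suc (Suc 0))" "prog_wf diff_prog (Suc (Suc 0))" "prog_wf mult_prog (Suc (Suc 0))"
  "prog_wf prod_encode_prog (Suc (Suc 0))" "prog_wf le_prog (Suc (Suc 0))"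
  "prog_wf pred_prog (Suc 0)" "prog_wf triangle_prog (Suc 0)" "prog_wf triangle_root_prog (Suc 0)"
  "prog_wf fst_prog (Suc 0)" "prog_wf snd_prog (Suc 0)"
  by (simp_all add: add_prog_def pred_prog_def diff_prog_def mult_prog_def triangle_prog_def
    prod_encode_prog_def le_prog_def triangle_root_prog_def fst_prog_def snd_prog_def)

lemma eval_add_prog[simp]: "prog_eval og add_prog [a, b] = a + b"
  by (induction a) (simp_all add: add_prog_def)
lemma eval_pred_prog[simp]: "prog_eval og pred_prog [a] = a - 1"
  by (cases a) (simp_all add: pred_prog_def)
lemma eval_diff_prog[simp]: "prog_eval og diff_prog [a, b] = a - b"
  by (induction b) (simp_all add: diff_prog_def)
lemma eval_mult_prog[simp]: "prog_eval og mult_prog [a, b] = a * b"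
  by (induction a) (simp_all add: mult_prog_def)
lemma eval_triangle_prog[simp]: "prog_eval og triangle_prog [a] = triangle a"
  by (induction a) (simp_all add: triangle_prog_def)
lemma eval_prod_encode_prog[simp]: "prog_eval og prod_encode_prog [a, b] = prod_encode (a, b)"
  by (simp add: prod_encode_prog_def prod_encode_def)
lemma eval_le_prog[simp]: "prog_eval og le_prog [a, b] = (if a \<le> b then 1 else 0)"
  by (simp add: le_prog_def)

fun triangle_root :: "nat \<Rightarrow> nat" where
  "triangle_root 0 = 0"
| "triangle_root (Suc c) = triangle_root c + (if triangle (Suc (triangle_root c)) \<le> Suc c then 1
  else 0)"

lemma eval_triangle_root_prog[simp]: "prog_eval og triangle_root_prog [c] = triangle_root c"
  by (induction c) (simp_all add: triangle_root_prog_def)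

lemma triangle_root_bounds: "triangle (triangle_root c) \<le> c \<and> c < triangle (Suc (triangle_root c))"
  by (induction c) auto

lemma prod_decode_triangle_root:
  "prod_decode c = (c - triangle (triangle_root c), triangle_root c - (c - triangle (triangle_root c)))"
proof -
  let ?s = "triangle_root c"
  let ?a = "c - triangle ?s"
  let ?b = "?s - ?a"
  have b1: "triangle ?s \<le> c" "c < triangle (Suc ?s)" using triangle_root_bounds by auto
  then have "?a \<le> ?s" by simp
  then have "?a + ?b = ?s" by simp
  then have "prod_encode (?a, ?b) = c" using b1 by (simp add: prod_encode_def)
  then show ?thesis by (metis prod_encode_inverse)
qed

lemma eval_fst_prog[simp]: "prog_eval og fst_prog [c] = fst (prod_decode c)"
  by (simp add: fst_prog_def prod_decode_triangle_root)
lemma eval_snd_prog[simp]: "prog_eval og snd_prog [c] = snd (prod_decode c)"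
  by (simp add: snd_prog_def prod_decode_triangle_root)

section \<open>Primitive recursive functions and predicates\<close>

definition prim_rec :: "(nat \<Rightarrow> nat) \<Rightarrow> bool" where
  "prim_rec F \<longleftrightarrow> (\<exists>t. prog_wf t 1 \<and> (\<forall>og n. prog_eval og t [n] = F n))"

abbreviation "pd1 m \<equiv> fst (prod_decode m)"
abbreviation "pd2 m \<equiv> snd (prod_decode m)"

lemma prod_encode_eq_0[simp]: "prod_encode (a, b) = 0 \<longleftrightarrow> a = 0 \<and> b = 0"
proof -
  have "prod_encode (0, 0) = 0" by (simp add: prod_encode_def)
  then show ?thesis by (metis prod_encode_eq prod.inject)
qed

lemma prim_rec_id: "prim_rec (\<lambda>n. n)"
  unfolding prim_rec_def by (rule exI[of _ "Pj 0"]) simp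

lemma prim_rec_const: "prim_rec (\<lambda>n. c)"
  unfolding prim_rec_def by (rule exI[of _ "const_prog c"]) simp

lemma prim_rec_prog1:
  assumes "prog_wf t (Suc 0)" "\<And>og a. prog_eval og t [a] = h a" "prim_rec F"
  shows "prim_rec (\<lambda>n. h (F n))"
proof -
  obtain tF where "prog_wf tF 1" "\<And>og n. prog_eval og tF [n] = F n" using assms(3)
    unfolding prim_rec_def by blast
  then show ?thesis unfolding prim_rec_def using assms by (intro exI[of _ "Cm t [tF]"]) simp
qed

lemma prim_rec_prog2:
  assumes "prog_wf t (Suc (Suc 0))" "\<And>og a b. prog_eval og t [a, b] = h a b" "prim_rec F" "prim_rec G"
  shows "prim_rec (\<lambda>n. h (F n) (G n))"
proof -
  obtain tF where F: "prog_wf tF 1" "\<And>og n. prog_eval og tF [n] = F n" using assms(3)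
    unfolding prim_rec_def by blast
  obtain tG where G: "prog_wf tG 1" "\<And>og n. prog_eval og tG [n] = G n" using assms(4)
    unfolding prim_rec_def by blast
  have "prog_wf (Cm t [tF, tG]) 1" using F(1) G(1) assms(1) by simp
  moreover have "prog_eval og (Cm t [tF, tG]) [n] = h (F n) (G n)" for og n
    using F(2) G(2) assms(2) by simp
  ultimately show ?thesis unfolding prim_rec_def by blast
qed

lemma prim_rec_comp:
  assumes "prim_rec H" "prim_rec F" shows "prim_rec (\<lambda>n. H (F n))"
proof -
  obtain tH where "prog_wf tH 1" "\<And>og n. prog_eval og tH [n] = H n"
    using assms(1) unfolding prim_rec_def by blast
  then show ?thesis using assms(2) by (intro prim_rec_prog1[of tH H]) simp_all
qed

lemma prim_rec_add: "prim_rec F \<Longrightarrow> prim_rec G \<Longrightarrow> prim_rec (\<lambda>n. F n + G n)"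
  by (rule prim_rec_prog2[of add_prog "(+)"]) simp_all
lemma prim_rec_diff: "prim_rec F \<Longrightarrow> prim_rec G \<Longrightarrow> prim_rec (\<lambda>n. F n - G n)"
  by (rule prim_rec_prog2[of diff_prog "(-)"]) simp_all
lemma prim_rec_mult: "prim_rec F \<Longrightarrow> prim_rec G \<Longrightarrow> prim_rec (\<lambda>n. F n * G n)"
  by (rule prim_rec_prog2[of mult_prog "(*)"]) simp_all
lemma prim_rec_prod_encode: "prim_rec F \<Longrightarrow> prim_rec G \<Longrightarrow> prim_rec (\<lambda>n. prod_encode (F n, G n))"
  by (rule prim_rec_prog2[of prod_encode_prog "\<lambda>a b. prod_encode (a, b)"]) simp_all
lemma prim_rec_fst: "prim_rec F \<Longrightarrow> prim_rec (\<lambda>n. fst (prod_decode (F n)))"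
  by (rule prim_rec_prog1[of fst_prog "\<lambda>a. fst (prod_decode a)"]) simp_all
lemma prim_rec_snd: "prim_rec F \<Longrightarrow> prim_rec (\<lambda>n. snd (prod_decode (F n)))"
  by (rule prim_rec_prog1[of snd_prog "\<lambda>a. snd (prod_decode a)"]) simp_all
lemma prim_rec_Suc: "prim_rec F \<Longrightarrow> prim_rec (\<lambda>n. Suc (F n))"
  by (rule prim_rec_prog1[of Sc Suc]) simp_all

lemma prim_rec_rec:
  assumes "prim_rec G" "prim_rec (\<lambda>m. H (pd1 m) (pd1 (pd2 m)) (pd2 (pd2 m)))" "prim_rec K"
  shows "prim_rec (\<lambda>n. rec_nat (G n) (\<lambda>i y. H i y n) (K n))"
proof -
  obtain tG where G: "prog_wf tG 1" "\<And>og n. prog_eval og tG [n] = G n" using assms(1)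
    unfolding prim_rec_def by blast
  obtain tH where H: "prog_wf tH 1" "\<And>og m. prog_eval og tH [m] = H (pd1 m) (pd1 (pd2 m)) (pd2 (pd2 m))"
    using assms(2) unfolding prim_rec_def by blast
  obtain tK where K: "prog_wf tK 1" "\<And>og n. prog_eval og tK [n] = K n" using assms(3)
    unfolding prim_rec_def by blast
  let ?t = "Cm (Rc tG (Cm tH [Cm prod_encode_prog [Pj 0, Cm prod_encode_prog [Pj 1, Pj 2]]])) [tK, Pj 0]"
  have "prog_wf ?t 1" using G H K by simp
  moreover have "prog_eval og ?t [n] = rec_nat (G n) (\<lambda>i y. H i y n) (K n)" for og n
    using G H K by simp
  ultimately show ?thesis unfolding prim_rec_def by blast
qed

lemma prim_rec_cong: "prim_rec F \<Longrightarrow> (\<And>n. F n = G n) \<Longrightarrow> prim_rec G"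
  by (metis ext)

definition prim_rec_pred :: "(nat \<Rightarrow> bool) \<Rightarrow> bool" where
  "prim_rec_pred P \<longleftrightarrow> prim_rec (\<lambda>n. if P n then 1 else 0)"

lemma prim_rec_if:
  assumes "prim_rec_pred P" "prim_rec F" "prim_rec G"
  shows "prim_rec (\<lambda>n. if P n then F n else G n)"
proof -
  have "prim_rec (\<lambda>n. (if P n then 1 else 0) * F n + (1 - (if P n then 1 else 0)) * G n)"
    using assms unfolding prim_rec_pred_def
    by (intro prim_rec_add prim_rec_mult prim_rec_diff prim_rec_const)
  moreover have "(\<lambda>n. (if P n then 1 else 0) * F n + (1 - (if P n then 1 else 0)) * G n) =
    (\<lambda>n. if P n then F n else G n)"
    by auto
  ultimately show ?thesis by simp
qed

lemma prim_rec_pred_eq: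
  assumes "prim_rec F" "prim_rec G" shows "prim_rec_pred (\<lambda>n. F n = G n)"
proof -
  have "prim_rec (\<lambda>n. (1 - (F n - G n)) * (1 - (G n - F n)))"
    using assms by (intro prim_rec_mult prim_rec_diff prim_rec_const)
  moreover have "(1 - (a - b)) * (1 - (b - a)) = (if a = b then 1 else (0::nat))" for a b :: nat
    by auto
  ultimately show ?thesis unfolding prim_rec_pred_def by simp
qed

lemma prim_rec_pred_le:
  assumes "prim_rec F" "prim_rec G" shows "prim_rec_pred (\<lambda>n. F n \<le> G n)"
proof -
  have "prim_rec (\<lambda>n. 1 - (F n - G n))" using assms by (intro prim_rec_diff prim_rec_const)
  moreover have "1 - (a - b) = (if a \<le> b then 1 else (0::nat))" for a b :: nat by auto
  ultimately show ?thesis unfolding prim_rec_pred_def by simp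
qed

lemma prim_rec_pred_less:
  assumes "prim_rec F" "prim_rec G" shows "prim_rec_pred (\<lambda>n. F n < G n)"
proof -
  have "prim_rec_pred (\<lambda>n. Suc (F n) \<le> G n)" using assms by (intro prim_rec_pred_le prim_rec_Suc)
  then show ?thesis by (simp add: Suc_le_eq)
qed

lemma prim_rec_pred_not: "prim_rec_pred P \<Longrightarrow> prim_rec_pred (\<lambda>n. \<not> P n)"
proof -
  assume "prim_rec_pred P"
  then have "prim_rec (\<lambda>n. 1 - (if P n then 1 else 0))" unfolding prim_rec_pred_def
    by (intro prim_rec_diff prim_rec_const)
  then show ?thesis unfolding prim_rec_pred_def by (rule prim_rec_cong) simp
qed

lemma prim_rec_pred_conj: "prim_rec_pred P \<Longrightarrow> prim_rec_pred Q \<Longrightarrow> prim_rec_pred (\<lambda>n. P n \<and> Q n)"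
proof -
  assume "prim_rec_pred P" "prim_rec_pred Q"
  then have "prim_rec (\<lambda>n. (if P n then 1 else 0) * (if Q n then 1 else 0))"
    unfolding prim_rec_pred_def by (intro prim_rec_mult)
  then show ?thesis unfolding prim_rec_pred_def by (rule prim_rec_cong) simp
qed

lemma prim_rec_pred_disj: "prim_rec_pred P \<Longrightarrow> prim_rec_pred Q \<Longrightarrow> prim_rec_pred (\<lambda>n. P n \<or> Q n)"
proof -
  assume "prim_rec_pred P" "prim_rec_pred Q"
  then have "prim_rec_pred (\<lambda>n. \<not> (\<not> P n \<and> \<not> Q n))" by (intro prim_rec_pred_not prim_rec_pred_conj)
  then show ?thesis by simp
qed

lemma prim_rec_pred_imp: "prim_rec_pred P \<Longrightarrow> prim_rec_pred Q \<Longrightarrow> prim_rec_pred (\<lambda>n. P n \<longrightarrow> Q n)"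
proof -
  assume "prim_rec_pred P" "prim_rec_pred Q"
  then have "prim_rec_pred (\<lambda>n. \<not> P n \<or> Q n)" by (intro prim_rec_pred_not prim_rec_pred_disj)
  then show ?thesis by simp
qed

lemma prim_rec_pred_comp: "prim_rec_pred P \<Longrightarrow> prim_rec F \<Longrightarrow> prim_rec_pred (\<lambda>n. P (F n))"
  unfolding prim_rec_pred_def by (drule prim_rec_comp) auto

lemma prim_rec_pred_comp_pair:
  assumes "prim_rec_pred (\<lambda>m. P (pd1 m) (pd2 m))"
  shows "prim_rec_pred (\<lambda>m. P (pd1 m) (pd2 (pd2 m)))"
  using prim_rec_pred_comp[OF assms, of "\<lambda>m. prod_encode (pd1 m, pd2 (pd2 m))"]
  by (simp add: prim_rec_prod_encode prim_rec_fst prim_rec_snd prim_rec_id)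

lemma rec_nat_bounded_all: "rec_nat 1 (\<lambda>i y. y * (if P i then 1 else 0)) b =
  (if \<forall>i<b. P i then 1 else (0::nat))"
  by (induction b) (auto simp: less_Suc_eq)

lemma prim_rec_pred_all_less:
  assumes P: "prim_rec_pred (\<lambda>m. P (pd1 m) (pd2 m))" and B: "prim_rec B"
  shows "prim_rec_pred (\<lambda>n. \<forall>i. i < B n \<longrightarrow> P i n)"
proof -
  have P': "prim_rec_pred (\<lambda>m. P (pd1 m) (pd2 (pd2 m)))" by (rule prim_rec_pred_comp_pair[OF P])
  have "prim_rec (\<lambda>n. rec_nat 1 (\<lambda>i y. y * (if P i n then 1 else 0)) (B n))"
    apply (rule prim_rec_rec[OF prim_rec_const _ B])
    apply (rule prim_rec_mult)
     apply (intro prim_rec_fst prim_rec_snd prim_rec_id)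
    using P' unfolding prim_rec_pred_def by simp
  then show ?thesis unfolding prim_rec_pred_def by (rule prim_rec_cong) (simp only: rec_nat_bounded_all)
qed

lemma prim_rec_pred_ex_less:
  assumes P: "prim_rec_pred (\<lambda>m. P (pd1 m) (pd2 m))" and B: "prim_rec B"
  shows "prim_rec_pred (\<lambda>n. \<exists>i. i < B n \<and> P i n)"
proof -
  have "prim_rec_pred (\<lambda>n. \<not> (\<forall>i. i < B n \<longrightarrow> \<not> P i n))"
    by (rule prim_rec_pred_not, rule prim_rec_pred_all_less[OF _ B], rule prim_rec_pred_not[OF P])
  then show ?thesis by simp
qed

lemma rec_nat_bounded_Least: "rec_nat 0 (\<lambda>j y. if y < j then y else if P j then j else Suc j) b
   = (if \<exists>i<b. P i then (LEAST i. P i) else b)"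
proof (induction b)
  case 0 then show ?case by simp
next
  case (Suc b)
  show ?case
  proof (cases "\<exists>i<b. P i")
    case True
    then have "(LEAST i. P i) < b" by (meson LeastI_ex Least_le order_le_less_trans)
    then show ?thesis using Suc True by (auto simp: less_Suc_eq)
  next
    case False
    then have "\<not> (\<exists>i<b. P i)" by simp
    moreover have "P b \<Longrightarrow> (LEAST i. P i) = b" using False by (metis Least_equality not_less)
    ultimately show ?thesis using Suc False by (auto simp: less_Suc_eq)
  qed
qed

lemma prim_rec_bounded_Least:
  assumes P: "prim_rec_pred (\<lambda>m. P (pd1 m) (pd2 m))" and B: "prim_rec B"
  shows "prim_rec (\<lambda>n. if \<exists>i<B n. P i n then (LEAST i. P i n) else B n)"
proof -
  have P': "prim_rec_pred (\<lambda>m. P (pd1 m) (pd2 (pd2 m)))" by (rule prim_rec_pred_comp_pair[OF P])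
  have "prim_rec (\<lambda>n. rec_nat 0 (\<lambda>j y. if y < j then y else if P j n then j else Suc j) (B n))"
    apply (rule prim_rec_rec[OF prim_rec_const _ B])
    apply (rule prim_rec_if)
      apply (rule prim_rec_pred_less; intro prim_rec_fst prim_rec_snd prim_rec_id)
     apply (intro prim_rec_fst prim_rec_snd prim_rec_id)
    apply (rule prim_rec_if[OF P'])
     apply (intro prim_rec_fst prim_rec_snd prim_rec_id prim_rec_Suc)+
    done
  then show ?thesis by (rule prim_rec_cong) (simp only: rec_nat_bounded_Least)
qed

lemma Least_div: "0 < b \<Longrightarrow> (LEAST q. a < Suc q * b) = a div (b::nat)"
proof (rule Least_equality)
  assume "0 < b"
  show "a < Suc (a div b) * b" using \<open>0 < b\<close>
    by (metis add.commute div_mult_mod_eq mod_less_divisor mult_Suc nat_add_left_cancel_less)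
  show "\<And>y. a < Suc y * b \<Longrightarrow> a div b \<le> y" using \<open>0 < b\<close>
    by (metis less_Suc_eq_le less_mult_imp_div_less)
qed

lemma prim_rec_div:
  assumes "prim_rec F" "prim_rec G" shows "prim_rec (\<lambda>n. F n div G n)"
proof -
  have "prim_rec (\<lambda>n. if G n = 0 then 0 else (if \<exists>q<Suc (F n). F n < Suc q * G n then
    (LEAST q. F n < Suc q * G n) else Suc (F n)))"
    apply (rule prim_rec_if)
      apply (rule prim_rec_pred_eq[OF assms(2) prim_rec_const])
     apply (rule prim_rec_const)
    apply (rule prim_rec_bounded_Least)
     apply (rule prim_rec_pred_less)
      apply (rule prim_rec_comp[OF assms(1)], intro prim_rec_snd prim_rec_id)
     apply (rule prim_rec_mult, intro prim_rec_Suc prim_rec_fst prim_rec_id)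
     apply (rule prim_rec_comp[OF assms(2)], intro prim_rec_snd prim_rec_id)
    apply (rule prim_rec_Suc[OF assms(1)])
    done
  moreover have "(if b = 0 then 0 else (if \<exists>q<Suc a. a < Suc q * b then (LEAST q. a < Suc q * b)
    else Suc a)) = a div b"
    for a b :: nat
  proof (cases "b = 0")
    case False
    have "a < Suc a * b" using False by (simp add: le_less_trans[of a "a * b"])
    then show ?thesis using False Least_div[of b a] by auto
  qed simp
  ultimately show ?thesis by (rule prim_rec_cong)
qed

lemma prim_rec_mod:
  assumes "prim_rec F" "prim_rec G" shows "prim_rec (\<lambda>n. F n mod G n)"
proof -
  have "prim_rec (\<lambda>n. F n - G n * (F n div G n))" using assms
    by (intro prim_rec_diff prim_rec_mult prim_rec_div)
  then show ?thesis by (rule prim_rec_cong) (simp add: minus_mult_div_eq_mod)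
qed

lemma prim_rec_pow:
  assumes "prim_rec F" "prim_rec G" shows "prim_rec (\<lambda>n. F n ^ G n)"
proof -
  have "prim_rec (\<lambda>n. rec_nat 1 (\<lambda>i y. y * F n) (G n))"
    apply (rule prim_rec_rec[OF prim_rec_const _ assms(2)])
    apply (rule prim_rec_mult, intro prim_rec_fst prim_rec_snd prim_rec_id)
    apply (rule prim_rec_comp[OF assms(1)], intro prim_rec_fst prim_rec_snd prim_rec_id)
    done
  moreover have "rec_nat 1 (\<lambda>i y. y * a) b = a ^ b" for a b :: nat by (induction b) auto
  ultimately show ?thesis by (rule prim_rec_cong)
qed

lemma prim_rec_pred_even: "prim_rec F \<Longrightarrow> prim_rec_pred (\<lambda>n. even (F n))"
proof -
  assume "prim_rec F"
  then have "prim_rec_pred (\<lambda>n. F n mod 2 = 0)" by (intro prim_rec_pred_eq prim_rec_mod prim_rec_const)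
  then show ?thesis by (simp add: even_iff_mod_2_eq_zero)
qed

lemma prim_rec_pred_odd: "prim_rec F \<Longrightarrow> prim_rec_pred (\<lambda>n. odd (F n))"
  by (intro prim_rec_pred_not prim_rec_pred_even)

lemma prim_rec_pred_mem: "prim_rec F \<Longrightarrow> prim_rec G \<Longrightarrow> prim_rec_pred (\<lambda>n. F n \<in> set_decode (G n))"
proof -
  assume "prim_rec F" "prim_rec G"
  then have "prim_rec_pred (\<lambda>n. odd (G n div 2 ^ F n))"
    by (intro prim_rec_pred_odd prim_rec_div prim_rec_pow prim_rec_const)
  then show ?thesis by (simp add: set_decode_def)
qed

definition "tl_code l = snd (prod_decode (l - 1))"
definition "hd_code l = fst (prod_decode (l - 1))"
definition "drop_code k l = rec_nat l (\<lambda>i y. tl_code y) k"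

lemma list_decode_tl_code: "list_decode (tl_code l) = tl (list_decode l)"
proof (cases l)
  case 0
  have "prod_decode 0 = (0, 0)" by (simp add: prod_decode_def prod_decode_aux.simps)
  then show ?thesis using 0 by (simp add: tl_code_def)
next
  case (Suc k)
  then show ?thesis by (simp add: tl_code_def split: prod.split)
qed

lemma list_decode_hd_code: "l \<noteq> 0 \<Longrightarrow> hd (list_decode l) = hd_code l"
  by (cases l) (auto simp: hd_code_def split: prod.split)

lemma list_decode_drop_code: "list_decode (drop_code k l) = drop k (list_decode l)"
  by (induction k) (simp_all add: drop_code_def list_decode_tl_code drop_Suc tl_drop)

lemma list_decode_zero_iff: "list_decode l = [] \<longleftrightarrow> l = 0"
  by (metis list_decode.simps(1) list_decode_inverse list_encode.simps(1))

lemma drop_code_eq_0_iff: "drop_code k l = 0 \<longleftrightarrow> length (list_decode l) \<le> k"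
  by (metis drop_eq_Nil list_decode_drop_code list_decode_zero_iff)

lemma arg_drop_code: "arg i (list_decode l) =
  (if drop_code i l = 0 then 0 else hd_code (drop_code i l))"
proof (cases "drop_code i l = 0")
  case True then show ?thesis by (simp add: drop_code_eq_0_iff arg_def)
next
  case False
  then have "i < length (list_decode l)" by (simp add: drop_code_eq_0_iff)
  moreover have "hd_code (drop_code i l) = hd (drop i (list_decode l))"
    using False list_decode_hd_code list_decode_drop_code by metis
  ultimately show ?thesis using False by (simp add: arg_def hd_drop_conv_nth)
qed

lemma length_le_encode: "length xs \<le> list_encode xs"
proof (induction xs)
  case (Cons x xs)
  then show ?case using le_prod_encode_2[of "list_encode xs" x] by simp
qed simp

lemma length_list_decode_Least: "length (list_decode l) =
  (if \<exists>k<Suc l. drop_code k l = 0 then (LEAST k. drop_code k l = 0)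
  else Suc l)"
proof -
  have le: "length (list_decode l) \<le> l" using length_le_encode[of "list_decode l"] by simp
  have "(LEAST k. drop_code k l = 0) = length (list_decode l)"
    by (rule Least_equality) (simp_all add: drop_code_eq_0_iff)
  moreover have "\<exists>k<Suc l. drop_code k l = 0" using le
    by (intro exI[of _ "length (list_decode l)"]) (simp add: drop_code_eq_0_iff)
  ultimately show ?thesis by simp
qed

lemma prim_rec_tl_code: "prim_rec F \<Longrightarrow> prim_rec (\<lambda>n. tl_code (F n))"
  unfolding tl_code_def by (intro prim_rec_snd prim_rec_diff prim_rec_const)

lemma prim_rec_hd_code: "prim_rec F \<Longrightarrow> prim_rec (\<lambda>n. hd_code (F n))"
  unfolding hd_code_def by (intro prim_rec_fst prim_rec_diff prim_rec_const)

lemma prim_rec_drop_code: "prim_rec K \<Longrightarrow> prim_rec L \<Longrightarrow> prim_rec (\<lambda>n. drop_code (K n) (L n))"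
  unfolding drop_code_def
  by (rule prim_rec_rec) (assumption, rule prim_rec_tl_code, intro prim_rec_fst prim_rec_snd
    prim_rec_id, assumption)

lemma prim_rec_arg: "prim_rec F \<Longrightarrow> prim_rec G \<Longrightarrow> prim_rec (\<lambda>n. arg (F n) (list_decode (G n)))"
  unfolding arg_drop_code
  by (intro prim_rec_if prim_rec_pred_eq prim_rec_drop_code prim_rec_const prim_rec_hd_code)

lemma prim_rec_length: "prim_rec F \<Longrightarrow> prim_rec (\<lambda>n. length (list_decode (F n)))"
  unfolding length_list_decode_Least
  apply (rule prim_rec_bounded_Least)
   apply (rule prim_rec_pred_eq[OF prim_rec_drop_code prim_rec_const])
    apply (intro prim_rec_fst prim_rec_id)
   apply (rule prim_rec_comp, assumption, intro prim_rec_snd prim_rec_id)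
  apply (rule prim_rec_Suc, assumption)
  done

section \<open>Sigma-1 predicates\<close>

definition sigma1 :: "(nat \<Rightarrow> bool) \<Rightarrow> bool" where
  "sigma1 P \<longleftrightarrow> (\<exists>Q. prim_rec_pred Q \<and> (\<forall>n. P n = (\<exists>z. Q (prod_encode (z, n)))))"

lemma prim_rec_pd: "prim_rec (\<lambda>m. pd1 m)" "prim_rec (\<lambda>m. pd2 m)"
  by (intro prim_rec_fst prim_rec_snd prim_rec_id)+

lemma sigma1_prim_rec_pred: "prim_rec_pred P \<Longrightarrow> sigma1 P"
  unfolding sigma1_def
  by (rule exI[of _ "\<lambda>m. P (pd2 m)"]) (auto intro: prim_rec_pred_comp[of P "\<lambda>m. pd2 m"] prim_rec_pd)

lemma sigma1_conj:
  assumes "sigma1 P" "sigma1 R" shows "sigma1 (\<lambda>n. P n \<and> R n)"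
proof -
  obtain Q1 where Q1: "prim_rec_pred Q1" "\<And>n. P n = (\<exists>z. Q1 (prod_encode (z, n)))" using assms(1)
    unfolding sigma1_def by blast
  obtain Q2 where Q2: "prim_rec_pred Q2" "\<And>n. R n = (\<exists>z. Q2 (prod_encode (z, n)))" using assms(2)
    unfolding sigma1_def by blast
  let ?Q = "\<lambda>m. Q1 (prod_encode (pd1 (pd1 m), pd2 m)) \<and> Q2 (prod_encode (pd2 (pd1 m), pd2 m))"
  have "prim_rec_pred ?Q"
    by (intro prim_rec_pred_conj prim_rec_pred_comp[OF Q1(1)] prim_rec_pred_comp[OF Q2(1)]
      prim_rec_prod_encode prim_rec_fst prim_rec_snd prim_rec_id)
  moreover have "(P n \<and> R n) = (\<exists>z. ?Q (prod_encode (z, n)))" for n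
  proof
    assume "P n \<and> R n"
    then obtain z1 z2 where "Q1 (prod_encode (z1, n))" "Q2 (prod_encode (z2, n))" using Q1 Q2 by blast
    then show "\<exists>z. ?Q (prod_encode (z, n))" by (intro exI[of _ "prod_encode (z1, z2)"]) simp
  next
    assume "\<exists>z. ?Q (prod_encode (z, n))"
    then show "P n \<and> R n" using Q1 Q2 by auto
  qed
  ultimately show ?thesis unfolding sigma1_def by blast
qed

lemma sigma1_disj:
  assumes "sigma1 P" "sigma1 R" shows "sigma1 (\<lambda>n. P n \<or> R n)"
proof -
  obtain Q1 where Q1: "prim_rec_pred Q1" "\<And>n. P n = (\<exists>z. Q1 (prod_encode (z, n)))" using assms(1)
    unfolding sigma1_def by blast
  obtain Q2 where Q2: "prim_rec_pred Q2" "\<And>n. R n = (\<exists>z. Q2 (prod_encode (z, n)))" using assms(2)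
    unfolding sigma1_def by blast
  have "prim_rec_pred (\<lambda>m. Q1 m \<or> Q2 m)" using Q1 Q2 by (intro prim_rec_pred_disj)
  moreover have "(P n \<or> R n) = (\<exists>z. Q1 (prod_encode (z, n)) \<or> Q2 (prod_encode (z, n)))" for n
    using Q1 Q2 by blast
  ultimately show ?thesis unfolding sigma1_def by blast
qed

lemma sigma1_ex:
  assumes "sigma1 (\<lambda>m. P (pd1 m) (pd2 m))" shows "sigma1 (\<lambda>n. \<exists>y. P y n)"
proof -
  obtain Q where Q: "prim_rec_pred Q" "\<And>m. P (pd1 m) (pd2 m) = (\<exists>z. Q (prod_encode (z, m)))"
    using assms unfolding sigma1_def by blast
  have Q': "P y n = (\<exists>z. Q (prod_encode (z, prod_encode (y, n))))" for y n
    using Q(2)[of "prod_encode (y, n)"] by simp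
  let ?Q = "\<lambda>m. Q (prod_encode (pd2 (pd1 m), prod_encode (pd1 (pd1 m), pd2 m)))"
  have "prim_rec_pred ?Q" by (intro prim_rec_pred_comp[OF Q(1)] prim_rec_prod_encode prim_rec_fst
    prim_rec_snd prim_rec_id)
  moreover have "(\<exists>y. P y n) = (\<exists>z. ?Q (prod_encode (z, n)))" for n
  proof
    assume "\<exists>y. P y n"
    then obtain y z where "Q (prod_encode (z, prod_encode (y, n)))" using Q' by blast
    then show "\<exists>z. ?Q (prod_encode (z, n))" by (intro exI[of _ "prod_encode (y, z)"]) simp
  next
    assume "\<exists>z. ?Q (prod_encode (z, n))"
    then show "\<exists>y. P y n" using Q' by auto
  qed
  ultimately show ?thesis unfolding sigma1_def by blast
qed

lemma collect_bound:
  assumes "\<forall>i<b. \<exists>z::nat. R (i::nat) z"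
  shows "\<exists>W. \<forall>i<b. \<exists>z<W. R i z"
proof -
  obtain f where f: "\<forall>i<b. R i (f i)" using assms by metis
  have "\<forall>i<b. f i < Suc (\<Sum>j<b. f j)"
    using member_le_sum[of _ "{..<b}" f] by (simp add: le_imp_less_Suc)
  then show ?thesis using f by blast
qed

lemma sigma1_ball:
  assumes P: "sigma1 (\<lambda>m. P (pd1 m) (pd2 m))" and B: "prim_rec B"
  shows "sigma1 (\<lambda>n. \<forall>i. i < B n \<longrightarrow> P i n)"
proof -
  obtain Q where Q: "prim_rec_pred Q" "\<And>m. P (pd1 m) (pd2 m) = (\<exists>z. Q (prod_encode (z, m)))"
    using P unfolding sigma1_def by blast
  have Q': "P i n = (\<exists>z. Q (prod_encode (z, prod_encode (i, n))))" for i n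
    using Q(2)[of "prod_encode (i, n)"] by simp
  let ?Q = "\<lambda>m. \<forall>i. i < B (pd2 m) \<longrightarrow> (\<exists>z. z < pd1 m \<and> Q (prod_encode (z, prod_encode (i, pd2 m))))"
  have "prim_rec_pred ?Q"
    apply (rule prim_rec_pred_all_less)
     apply (rule prim_rec_pred_ex_less)
      apply (rule prim_rec_pred_comp[OF Q(1)])
      apply (intro prim_rec_prod_encode prim_rec_fst prim_rec_snd prim_rec_id)
     apply (intro prim_rec_fst prim_rec_snd prim_rec_id)
    apply (rule prim_rec_comp[OF B], intro prim_rec_snd prim_rec_id)
    done
  moreover have "(\<forall>i. i < B n \<longrightarrow> P i n) = (\<exists>z. ?Q (prod_encode (z, n)))" for n
  proof
    assume "\<forall>i. i < B n \<longrightarrow> P i n"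
    then have "\<forall>i<B n. \<exists>z. Q (prod_encode (z, prod_encode (i, n)))" using Q' by blast
    then obtain W where "\<forall>i<B n. \<exists>z<W. Q (prod_encode (z, prod_encode (i, n)))"
      using collect_bound[of "B n" "\<lambda>i z. Q (prod_encode (z, prod_encode (i, n)))"] by blast
    then show "\<exists>z. ?Q (prod_encode (z, n))" by (intro exI[of _ W]) simp
  next
    assume "\<exists>z. ?Q (prod_encode (z, n))"
    then show "\<forall>i. i < B n \<longrightarrow> P i n" using Q' by auto
  qed
  ultimately show ?thesis unfolding sigma1_def by blast
qed

lemma sigma1_comp:
  assumes P: "sigma1 P" and F: "prim_rec F" shows "sigma1 (\<lambda>n. P (F n))"
proof -
  obtain Q where Q: "prim_rec_pred Q" "\<And>n. P n = (\<exists>z. Q (prod_encode (z, n)))" using P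
    unfolding sigma1_def by blast
  have "prim_rec_pred (\<lambda>m. Q (prod_encode (pd1 m, F (pd2 m))))"
    by (intro prim_rec_pred_comp[OF Q(1)] prim_rec_prod_encode prim_rec_fst prim_rec_id
      prim_rec_comp[OF F] prim_rec_snd)
  moreover have "P (F n) = (\<exists>z. Q (prod_encode (pd1 (prod_encode (z, n)), F (pd2 (prod_encode (z, n))))))"
    for n
    using Q(2) by simp
  ultimately show ?thesis unfolding sigma1_def by blast
qed

lemma sigma1_mem: "sigma1 (\<lambda>n. n \<in> V) \<Longrightarrow> prim_rec F \<Longrightarrow> sigma1 (\<lambda>n. F n \<in> V)"
  by (rule sigma1_comp)

lemma sigma1_rel2:
  assumes "sigma1 (\<lambda>m. R (pd1 m) (pd2 m))" "prim_rec F" "prim_rec G"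
  shows "sigma1 (\<lambda>n. R (F n) (G n))"
  using sigma1_comp[OF assms(1), of "\<lambda>n. prod_encode (F n, G n)"] assms(2,3)
  by (simp add: prim_rec_prod_encode)

lemma sigma1_rel3:
  assumes "sigma1 (\<lambda>m. R (pd1 m) (pd1 (pd2 m)) (pd2 (pd2 m)))" "prim_rec F" "prim_rec G" "prim_rec H"
  shows "sigma1 (\<lambda>n. R (F n) (G n) (H n))"
  using sigma1_comp[OF assms(1), of "\<lambda>n. prod_encode (F n, prod_encode (G n, H n))"] assms(2-4)
  by (simp add: prim_rec_prod_encode)

lemmas prim_rec_intros = prim_rec_const prim_rec_id prim_rec_add prim_rec_diff prim_rec_mult
  prim_rec_prod_encode prim_rec_fst prim_rec_snd prim_rec_Suc prim_rec_div prim_rec_mod prim_rec_pow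
  prim_rec_arg prim_rec_length prim_rec_if
lemmas prim_rec_pred_intros = prim_rec_pred_eq prim_rec_pred_le prim_rec_pred_less
  prim_rec_pred_not prim_rec_pred_conj prim_rec_pred_disj prim_rec_pred_imp
  prim_rec_pred_even prim_rec_pred_odd prim_rec_pred_mem prim_rec_pred_all_less prim_rec_pred_ex_less
lemmas sigma1_intros = sigma1_conj sigma1_disj sigma1_ex sigma1_ball sigma1_mem

text \<open>The code e below is the minimisation of a program that tests Q (z, n).\<close>

lemma ev_search_prog:
  assumes "prim_rec_pred Q"
  shows "\<exists>e. \<forall>n. (\<exists>y. ev (chi {}) e [n] y) \<longleftrightarrow> (\<exists>z. Q (prod_encode (z, n)))"
proof -
  obtain tQ where tQ: "prog_wf tQ 1" "\<And>og n. prog_eval og tQ [n] = (if Q n then 1 else 0)"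
    using assms unfolding prim_rec_pred_def prim_rec_def by blast
  define t where "t = Cm diff_prog [const_prog 1, Cm tQ [Cm prod_encode_prog [Pj 0, Pj 1]]]"
  have wf: "prog_wf t (length [z, n])" for z n using tQ(1) by (simp add: t_def numeral_2_eq_2)
  have val: "prog_eval og t [z, n] = (if Q (prod_encode (z, n)) then 0 else 1)" for og z n
    using tQ(2) by (simp add: t_def)
  have "chi {} = (\<lambda>_. Some 0)" by (simp add: chi_def fun_eq_iff)
  then have "ev (chi {}) (prog_code t) [z, n] (if Q (prod_encode (z, n)) then 0 else 1)" for z n
    using ev_prog_code[OF wf, of "\<lambda>_. 0"] val by simp
  then have ev_t: "ev (chi {}) (prog_code t) [z, n] y \<longleftrightarrow> y = (if Q (prod_encode (z, n)) then 0 else 1)"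
    for z n y
    using ev_det by blast
  define e where "e = 7 * prog_code t + 5"
  have e: "e mod 7 = 5" "e div 7 = prog_code t" by (simp_all add: e_def)
  have "(\<exists>y. ev (chi {}) e [n] y) \<longleftrightarrow> (\<exists>z. Q (prod_encode (z, n)))" for n
  proof
    assume "\<exists>y. ev (chi {}) e [n] y"
    then obtain y where "ev (chi {}) e [n] y" by blast
    then show "\<exists>z. Q (prod_encode (z, n))"
      by cases (use e ev_t in \<open>auto split: if_splits\<close>)
  next
    assume ex: "\<exists>z. Q (prod_encode (z, n))"
    define y where "y = (LEAST z. Q (prod_encode (z, n)))"
    have "Q (prod_encode (y, n))" using ex unfolding y_def by (rule LeastI_ex)
    moreover have "\<forall>m<y. \<not> Q (prod_encode (m, n))" unfolding y_def using not_less_Least by blast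
    ultimately have "ev (chi {}) e [n] y"
      by - (rule ev.ev_mu, use e ev_t in auto)
    then show "\<exists>y. ev (chi {}) e [n] y" by blast
  qed
  then show ?thesis by blast
qed

lemma sigma1_imp_ce: "sigma1 P \<Longrightarrow> ce {n. P n}"
  unfolding sigma1_def ce_def Phi_def
  by (fastforce dest: ev_search_prog)

section \<open>Derivability from axioms\<close>

text \<open>An inductive system on codes: J x w u says that x follows from the premises coded by w
  and the axioms coded by u; the axioms are drawn from Og.\<close>

inductive_set derivable :: "(nat \<Rightarrow> nat \<Rightarrow> nat \<Rightarrow> bool) \<Rightarrow> nat set \<Rightarrow> nat set" for J Og where
  derivableI: "J x w u \<Longrightarrow> \<forall>j\<in>set_decode w. j \<in> derivable J Og \<Longrightarrow> set_decode u \<subseteq> Og \<Longrightarrow> x \<in> derivable J Og"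

text \<open>A derivation lists its steps latest first: the premises of a step (x, w, u) occur further
  down the list.\<close>

fun derivation :: "(nat \<Rightarrow> nat \<Rightarrow> nat \<Rightarrow> bool) \<Rightarrow> (nat \<times> nat \<times> nat) list \<Rightarrow> nat set \<Rightarrow> bool" where
  "derivation J [] Og = True"
| "derivation J ((x, w, u) # L) Og \<longleftrightarrow>
     derivation J L Og \<and> J x w u \<and> set_decode w \<subseteq> fst ` set L \<and> set_decode u \<subseteq> Og"

lemma derivation_append:
  "derivation J L1 Og \<Longrightarrow> derivation J L2 Og \<Longrightarrow> derivation J (L1 @ L2) Og"
  by (induction J L1 Og rule: derivation.induct) (auto simp: image_Un)

lemma derivation_mono: "derivation J L Og \<Longrightarrow> Og \<subseteq> Og' \<Longrightarrow> derivation J L Og'"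
  by (induction J L Og rule: derivation.induct) auto

lemma derivation_sound: "derivation J L Og \<Longrightarrow> fst ` set L \<subseteq> derivable J Og"
proof (induction J L Og rule: derivation.induct)
  case (2 J x w u L Og)
  then have "x \<in> derivable J Og" by - (rule derivableI, auto)
  then show ?case using 2 by simp
qed simp

lemma derivable_has_derivation:
  assumes "x \<in> derivable J Og" shows "\<exists>L. derivation J L Og \<and> x \<in> fst ` set L"
  using assms
proof (induction rule: derivable.induct)
  case (derivableI x w u)
  have "\<exists>L. derivation J L Og \<and> F \<subseteq> fst ` set L" if "finite F" "F \<subseteq> set_decode w" for F
    using that
  proof (induction F rule: finite_induct)
    case empty
    show ?case by (intro exI[of _ "[]"]) simp
  next
    case (insert j F)
    then obtain L1 L2 where "derivation J L1 Og" "F \<subseteq> fst ` set L1" "derivation J L2 Og" "j \<in> fst ` set L2"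
      using derivableI.IH by blast
    then show ?case by (intro exI[of _ "L1 @ L2"]) (auto intro: derivation_append)
  qed
  from this[OF finite_set_decode subset_refl]
  obtain L where "derivation J L Og" "set_decode w \<subseteq> fst ` set L" by blast
  then have "derivation J ((x, w, u) # L) Og" using derivableI.hyps by simp
  then show ?case by (intro exI[of _ "(x, w, u) # L"]) simp
qed

lemma derivation_iff_nth:
  "derivation J L Og \<longleftrightarrow> (\<forall>i<length L. case L ! i of (x, w, u) \<Rightarrow>
     J x w u \<and> (\<forall>j\<in>set_decode w. \<exists>k<length L. i < k \<and> fst (L ! k) = j) \<and> set_decode u \<subseteq> Og)"
proof (induction J L Og rule: derivation.induct)
  case (2 J x w u L Og)
  have "set_decode w \<subseteq> fst ` set L \<longleftrightarrow> (\<forall>j\<in>set_decode w. \<exists>k<length L. fst (L ! k) = j)"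
    by (force simp: in_set_conv_nth)
  then show ?case
    by (simp only: derivation.simps 2 length_Cons All_less_Suc2 Ex_less_Suc2 nth_Cons_0 nth_Cons_Suc
        Suc_less_eq zero_less_Suc less_nat_zero_code simp_thms prod.case) (rule conj_commute)
qed simp

definition decode_triple :: "nat \<Rightarrow> nat \<times> nat \<times> nat" where
  "decode_triple t = (pd1 t, pd1 (pd2 t), pd2 (pd2 t))"

lemma decode_triple_surj: "\<exists>c. L = map decode_triple (list_decode c)"
proof -
  have "L = map decode_triple (map (\<lambda>(x, w, u). prod_encode (x, prod_encode (w, u))) L)"
    by (induction L) (auto simp: decode_triple_def)
  then show ?thesis by (metis list_encode_inverse)
qed

lemma set_decode_less: "j \<in> set_decode w \<Longrightarrow> j < w"
proof -
  assume "j \<in> set_decode w"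
  then have "odd (w div 2 ^ j)" by (simp add: set_decode_def)
  then have "w div 2 ^ j \<noteq> 0" by (metis even_zero)
  then have "2 ^ j \<le> w" by (simp add: div_eq_0_iff not_le)
  moreover have "j < 2 ^ j" by (rule less_exp)
  ultimately show "j < w" by linarith
qed

lemma Ball_set_decode_iff: "(\<forall>j\<in>set_decode w. P j) \<longleftrightarrow> (\<forall>j<w. j \<in> set_decode w \<longrightarrow> P j)"
  by (meson set_decode_less)

lemma derivation_code_iff:
  "derivation J (map decode_triple (list_decode c)) (set_decode U) \<longleftrightarrow>
   (\<forall>i<length (list_decode c).
      J (pd1 (arg i (list_decode c))) (pd1 (pd2 (arg i (list_decode c))))
        (pd2 (pd2 (arg i (list_decode c))))
    \<and> (\<forall>j<pd1 (pd2 (arg i (list_decode c))). j \<in> set_decode (pd1 (pd2 (arg i (list_decode c)))) \<longrightarrow>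
         (\<exists>k<length (list_decode c). i < k \<and> pd1 (arg k (list_decode c)) = j))
    \<and> (\<forall>j<pd2 (pd2 (arg i (list_decode c))). j \<in> set_decode (pd2 (pd2 (arg i (list_decode c)))) \<longrightarrow>
         j \<in> set_decode U))"
  (is "_ \<longleftrightarrow> (\<forall>i<length ?l. ?P i)")
proof -
  have nth: "map decode_triple ?l ! k = (pd1 (arg k ?l), pd1 (pd2 (arg k ?l)), pd2 (pd2 (arg k ?l)))"
    if "k < length ?l" for k
    using that by (simp add: arg_def decode_triple_def)
  have ex: "(\<exists>k<length ?l. i < k \<and> fst (map decode_triple ?l ! k) = j) \<longleftrightarrow>
      (\<exists>k<length ?l. i < k \<and> pd1 (arg k ?l) = j)" for i j
    using nth by auto
  have "(case map decode_triple ?l ! i of (x, w, u) \<Rightarrow>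
      J x w u \<and> (\<forall>j\<in>set_decode w. \<exists>k<length ?l. i < k \<and> fst (map decode_triple ?l ! k) = j)
      \<and> set_decode u \<subseteq> set_decode U) \<longleftrightarrow> ?P i" if "i < length ?l" for i
    unfolding nth[OF that] prod.case ex subset_eq Ball_set_decode_iff[symmetric] ..
  then show ?thesis unfolding derivation_iff_nth length_map by auto
qed

lemma derivation_restrict_axioms:
  "derivation J L Og \<Longrightarrow> derivation J L (\<Union>(x, w, u)\<in>set L. set_decode u)"
  by (induction J L Og rule: derivation.induct) (force intro: derivation_mono)+

lemma derivation_axioms_subset:
  "derivation J L Og \<Longrightarrow> (\<Union>(x, w, u)\<in>set L. set_decode u) \<subseteq> Og"
  by (induction J L Og rule: derivation.induct) auto

lemma derivable_sigma1:
  assumes J: "sigma1 (\<lambda>m. J (pd1 m) (pd1 (pd2 m)) (pd2 (pd2 m)))"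
  shows "\<exists>Z. sigma1 (\<lambda>m. m \<in> Z) \<and> (\<forall>Og. derivable J Og =
    {x. \<exists>u. prod_encode (x, u) \<in> Z \<and> set_decode u \<subseteq> Og})"
proof -
  define Z where "Z = {m. \<exists>c. derivation J (map decode_triple (list_decode c)) (set_decode (pd2 m)) \<and>
    (\<exists>k<length (list_decode c). pd1 (arg k (list_decode c)) = pd1 m)}"
  have "sigma1 (\<lambda>m. m \<in> Z)"
    unfolding Z_def mem_Collect_eq derivation_code_iff
    by (intro sigma1_intros sigma1_rel3[OF J] sigma1_prim_rec_pred prim_rec_pred_intros prim_rec_intros)
  moreover have "derivable J Og = {x. \<exists>u. prod_encode (x, u) \<in> Z \<and> set_decode u \<subseteq> Og}" for Og
  proof (intro set_eqI iffI)
    fix x assume "x \<in> derivable J Og"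
    then obtain L where L: "derivation J L Og" "x \<in> fst ` set L"
      using derivable_has_derivation by blast
    obtain c where c: "L = map decode_triple (list_decode c)" using decode_triple_surj by blast
    define U where "U = set_encode (\<Union>(x, w, u)\<in>set L. set_decode u)"
    have "finite (\<Union>(x, w, u)\<in>set L. set_decode u)" by auto
    then have "derivation J L (set_decode U)" "set_decode U \<subseteq> Og"
      using derivation_restrict_axioms[OF L(1)] derivation_axioms_subset[OF L(1)]
      by (simp_all add: U_def)
    moreover have "\<exists>k<length (list_decode c). pd1 (arg k (list_decode c)) = x"
      using L(2) by (auto simp: c in_set_conv_nth arg_def decode_triple_def)
    ultimately show "x \<in> {x. \<exists>u. prod_encode (x, u) \<in> Z \<and> set_decode u \<subseteq> Og}"
      unfolding Z_def using c by auto
  next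
    fix x assume "x \<in> {x. \<exists>u. prod_encode (x, u) \<in> Z \<and> set_decode u \<subseteq> Og}"
    then obtain U c k where D: "derivation J (map decode_triple (list_decode c)) (set_decode U)"
      "set_decode U \<subseteq> Og" and k: "k < length (list_decode c)" "pd1 (arg k (list_decode c)) = x"
      unfolding Z_def by auto
    have "map decode_triple (list_decode c) ! k \<in> set (map decode_triple (list_decode c))"
      using k(1) by simp
    moreover have "fst (map decode_triple (list_decode c) ! k) = x"
      using k by (simp add: arg_def decode_triple_def)
    ultimately have "x \<in> fst ` set (map decode_triple (list_decode c))" by (metis image_eqI)
    moreover have "derivation J (map decode_triple (list_decode c)) Og" using D derivation_mono by blast
    ultimately show "x \<in> derivable J Og" using derivation_sound by blast
  qed
  ultimately show ?thesis by blast
qed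

declare set_encode_insert [simp del] \<comment> \<open>keep set_encode of explicit finite sets folded\<close>

definition bapp :: "(nat \<Rightarrow> nat option) \<Rightarrow> (nat \<Rightarrow> nat option) \<Rightarrow> nat \<Rightarrow> nat option" where
  "bapp \<phi> \<psi> = (\<lambda>n. case \<phi> 0 of None \<Rightarrow> None | Some e \<Rightarrow> Phi (pjoin \<phi> \<psi>) e n)"

lemma Bapp_eq: "Bapp \<phi> \<psi> = Some (bapp \<phi> \<psi>)"
  by (simp add: Bapp_def bapp_def)

lemma pjoin_even: "even q \<Longrightarrow> pjoin \<phi> \<psi> q = \<phi> (q div 2)" by (simp add: pjoin_def)
lemma pjoin_odd: "odd q \<Longrightarrow> pjoin \<phi> \<psi> q = \<psi> (q div 2)" by (simp add: pjoin_def)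

lemma pjoin_mono: "\<phi> \<subseteq>\<^sub>m \<phi>' \<Longrightarrow> \<psi> \<subseteq>\<^sub>m \<psi>' \<Longrightarrow> pjoin \<phi> \<psi> \<subseteq>\<^sub>m pjoin \<phi>' \<psi>'"
  unfolding map_le_def pjoin_def by (auto simp: dom_def)

lemma bapp_mono:
  assumes "\<phi> \<subseteq>\<^sub>m \<phi>'" "\<psi> \<subseteq>\<^sub>m \<psi>'" shows "bapp \<phi> \<psi> \<subseteq>\<^sub>m bapp \<phi>' \<psi>'"
  unfolding map_le_def
proof
  fix n assume "n \<in> dom (bapp \<phi> \<psi>)"
  then obtain y e where y: "\<phi> 0 = Some e" "Phi (pjoin \<phi> \<psi>) e n = Some y"
    by (auto simp: bapp_def split: option.splits)
  have "\<phi>' 0 = Some e" using y(1) assms(1) by (force simp: map_le_def)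
  moreover have "ev (pjoin \<phi>' \<psi>') e [n] y" using y(2) ev_mono pjoin_mono[OF assms]
    by (simp add: Phi_Some)
  then have "Phi (pjoin \<phi>' \<psi>') e n = Some y" by (simp add: Phi_Some)
  ultimately show "bapp \<phi> \<psi> n = bapp \<phi>' \<psi>' n" using y by (simp add: bapp_def)
qed

lemma restrict_map_le: "f |` A \<subseteq>\<^sub>m f" by (auto simp: map_le_def)

lemma restrict_pjoin_le:
  "pjoin \<chi> \<tau> |` Q \<subseteq>\<^sub>m pjoin (\<chi> |` insert 0 ((\<lambda>q. q div 2) ` {q\<in>Q. even q}))
    (\<tau> |` ((\<lambda>q. q div 2) ` {q\<in>Q. odd q}))"
  unfolding map_le_def pjoin_def by (auto simp: restrict_map_def split: if_splits)

lemma bapp_finite_use: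
  assumes fin: "finite (dom \<rho>)" and le: "\<rho> \<subseteq>\<^sub>m bapp \<chi> \<tau>"
  shows "\<exists>\<chi>0 \<tau>0. \<chi>0 \<subseteq>\<^sub>m \<chi> \<and> \<tau>0 \<subseteq>\<^sub>m \<tau> \<and> finite (dom \<chi>0) \<and> finite (dom \<tau>0) \<and> \<rho> \<subseteq>\<^sub>m bapp \<chi>0 \<tau>0"
proof (cases "dom \<rho> = {}")
  case True
  then show ?thesis by (intro exI[of _ Map.empty]) (auto simp: map_le_def)
next
  case False
  then obtain n0 where "n0 \<in> dom \<rho>" by blast
  then have "bapp \<chi> \<tau> n0 \<noteq> None" using le by (force simp: map_le_def)
  then obtain e where e: "\<chi> 0 = Some e" by (auto simp: bapp_def split: option.splits)
  let ?I = "(\<lambda>n. (e, [n], the (\<rho> n))) ` dom \<rho>"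
  have "ev (pjoin \<chi> \<tau>) e [n] (the (\<rho> n))" if n: "n \<in> dom \<rho>" for n
  proof -
    obtain y where y: "\<rho> n = Some y" using n by blast
    then have "bapp \<chi> \<tau> n = Some y" using le n by (simp add: map_le_def)
    then show ?thesis using e y by (simp add: bapp_def Phi_Some)
  qed
  then have "\<forall>(e', xs, y)\<in>?I. ev (pjoin \<chi> \<tau>) e' xs y" by auto
  then have "\<forall>(e', xs, y)\<in>?I. \<exists>Q. finite Q \<and> ev (pjoin \<chi> \<tau> |` Q) e' xs y"
    using ev_finite_use by fast
  then obtain Q where Q: "finite Q" "\<forall>n\<in>dom \<rho>. ev (pjoin \<chi> \<tau> |` Q) e [n] (the (\<rho> n))"
    using ev_finite_use_Union[of ?I "pjoin \<chi> \<tau>"] fin by auto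
  define \<chi>0 where "\<chi>0 = \<chi> |` insert 0 ((\<lambda>q. q div 2) ` {q\<in>Q. even q})"
  define \<tau>0 where "\<tau>0 = \<tau> |` ((\<lambda>q. q div 2) ` {q\<in>Q. odd q})"
  have "\<rho> \<subseteq>\<^sub>m bapp \<chi>0 \<tau>0"
    unfolding map_le_def
  proof
    fix n assume n: "n \<in> dom \<rho>"
    have "ev (pjoin \<chi>0 \<tau>0) e [n] (the (\<rho> n))"
      using Q(2) n unfolding \<chi>0_def \<tau>0_def by (blast intro: ev_mono restrict_pjoin_le)
    then have "Phi (pjoin \<chi>0 \<tau>0) e n = Some (the (\<rho> n))" by (simp add: Phi_Some)
    moreover have "\<chi>0 0 = Some e" using e by (simp add: \<chi>0_def)
    ultimately show "\<rho> n = bapp \<chi>0 \<tau>0 n" using n by (auto simp: bapp_def)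
  qed
  moreover have "finite (dom \<chi>0)" "finite (dom \<tau>0)" using Q(1) by (simp_all add: \<chi>0_def \<tau>0_def)
  moreover have "\<chi>0 \<subseteq>\<^sub>m \<chi>" "\<tau>0 \<subseteq>\<^sub>m \<tau>" unfolding \<chi>0_def \<tau>0_def by (rule restrict_map_le)+
  ultimately show ?thesis by blast
qed

section \<open>Tables and the embedding\<close>

lemma D_eq: "D = set_decode"
  by (auto simp: D_def set_decode_def fun_eq_iff)

definition table :: "nat \<Rightarrow> nat \<Rightarrow> nat option" where
  "table u = (\<lambda>a. if \<exists>b. prod_encode (prod_encode (a, b), 1) \<in> set_decode u
      then Some (LEAST b. prod_encode (prod_encode (a, b), 1) \<in> set_decode u) else None)"

definition table_rel :: "nat \<Rightarrow> nat \<Rightarrow> nat \<Rightarrow> bool" where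
  "table_rel u a y \<longleftrightarrow> prod_encode (prod_encode (a, y), 1) \<in> set_decode u \<and>
      (\<forall>b<y. prod_encode (prod_encode (a, b), 1) \<notin> set_decode u)"

lemma table_rel_iff: "table_rel u a y \<longleftrightarrow> table u a = Some y"
proof
  assume "table_rel u a y"
  then show "table u a = Some y" unfolding table_rel_def table_def
    by (auto intro!: Least_equality simp: not_less[symmetric])
next
  assume "table u a = Some y"
  then show "table_rel u a y" unfolding table_rel_def table_def
    by (auto split: if_splits intro: LeastI dest: not_less_Least)
qed

fun apply_tables :: "(nat \<Rightarrow> nat option) \<Rightarrow> nat list \<Rightarrow> nat \<Rightarrow> nat option" where
  "apply_tables \<phi> [] = \<phi>"
| "apply_tables \<phi> (u # us) = bapp (apply_tables \<phi> us) (table u)"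

lemma pd1_less: "c \<noteq> 0 \<Longrightarrow> pd1 c < c"
proof -
  assume "c \<noteq> 0"
  obtain a b where ab: "prod_decode c = (a, b)" by (cases "prod_decode c")
  then have c: "c = prod_encode (a, b)" by (metis prod_decode_inverse)
  show ?thesis
  proof (cases "a = 0")
    case True then show ?thesis using ab \<open>c \<noteq> 0\<close> by simp
  next
    case False
    then have "1 \<le> triangle (a + b)" by (cases "a + b") auto
    then show ?thesis using ab c by (simp add: prod_encode_def)
  qed
qed

text \<open>emb \<chi> is the set of codes of facts about \<chi>: the code of ((a, b), 1) says \<chi> a = Some b, and
  the code of (n, u) with u even says that n lies in emb (bapp \<chi> (table u)), where the finite set coded
  by u is read as the graph of a finite function.\<close>

function emb_mem :: "(nat \<Rightarrow> nat option) \<Rightarrow> nat \<Rightarrow> bool" where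
  "emb_mem \<chi> c = (if c = 0 then False
     else if pd2 c = 1 then \<chi> (pd1 (pd1 c)) = Some (pd2 (pd1 c))
     else if even (pd2 c) then emb_mem (bapp \<chi> (table (pd2 c))) (pd1 c) else False)"
  by auto
termination
  by (relation "measure snd") (auto intro: pd1_less)

declare emb_mem.simps[simp del]

lemma emb_mem_prod_encode: "emb_mem \<chi> (prod_encode (n, u)) = (prod_encode (n, u) \<noteq> 0 \<and>
   (if u = 1 then \<chi> (pd1 n) = Some (pd2 n) else (even u \<and> emb_mem (bapp \<chi> (table u)) n)))"
  by (subst emb_mem.simps) auto

lemma emb_mem_0[simp]: "\<not> emb_mem \<chi> 0"
  by (subst emb_mem.simps) simp

lemma emb_mem_mono: "emb_mem \<chi> c \<Longrightarrow> \<chi> \<subseteq>\<^sub>m \<chi>' \<Longrightarrow> emb_mem \<chi>' c"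
proof (induction c arbitrary: \<chi> \<chi>' rule: less_induct)
  case (less c)
  obtain n u where c: "c = prod_encode (n, u)" by (metis prod_decode_inverse surj_pair)
  have m: "emb_mem \<chi> (prod_encode (n, u))" using less.prems c by simp
  then have nz: "prod_encode (n, u) \<noteq> 0" by (simp add: emb_mem_prod_encode)
  show ?case
  proof (cases "u = 1")
    case True
    then have "\<chi> (pd1 n) = Some (pd2 n)" using m by (simp add: emb_mem_prod_encode)
    then have "\<chi>' (pd1 n) = Some (pd2 n)" using less.prems(2) by (force simp: map_le_def)
    then show ?thesis using c True nz by (simp add: emb_mem_prod_encode)
  next
    case False
    then have h: "even u" "emb_mem (bapp \<chi> (table u)) n" using m by (simp_all add: emb_mem_prod_encode)
    have "pd1 c < c" using c nz by (intro pd1_less) simp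
    then have "n < c" using c by simp
    moreover have "bapp \<chi> (table u) \<subseteq>\<^sub>m bapp \<chi>' (table u)" using less.prems(2) by (rule bapp_mono) simp
    ultimately have "emb_mem (bapp \<chi>' (table u)) n" using less.IH h(2) by blast
    then show ?thesis using c False h(1) nz by (simp add: emb_mem_prod_encode)
  qed
qed

lemma emb_mem_finite: "emb_mem \<chi> c \<Longrightarrow> \<exists>\<chi>0. \<chi>0 \<subseteq>\<^sub>m \<chi> \<and> finite (dom \<chi>0) \<and> emb_mem \<chi>0 c"
proof (induction c arbitrary: \<chi> rule: less_induct)
  case (less c)
  obtain n u where c: "c = prod_encode (n, u)" by (metis prod_decode_inverse surj_pair)
  have m: "emb_mem \<chi> (prod_encode (n, u))" using less.prems c by simp
  then have nz: "prod_encode (n, u) \<noteq> 0" by (simp add: emb_mem_prod_encode)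
  show ?case
  proof (cases "u = 1")
    case True
    then have h: "\<chi> (pd1 n) = Some (pd2 n)" using m by (simp add: emb_mem_prod_encode)
    have "\<chi> |` {pd1 n} \<subseteq>\<^sub>m \<chi>" by (rule restrict_map_le)
    moreover have "emb_mem (\<chi> |` {pd1 n}) c" using h c True nz by (simp add: emb_mem_prod_encode)
    ultimately show ?thesis by (intro exI[of _ "\<chi> |` {pd1 n}"]) simp
  next
    case False
    then have h: "even u" "emb_mem (bapp \<chi> (table u)) n" using m by (simp_all add: emb_mem_prod_encode)
    have "pd1 c < c" using c nz by (intro pd1_less) simp
    then have "n < c" using c by simp
    then obtain \<rho> where \<rho>: "\<rho> \<subseteq>\<^sub>m bapp \<chi> (table u)" "finite (dom \<rho>)" "emb_mem \<rho> n"
      using less.IH h(2) by blast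
    obtain \<chi>0 \<tau>0 where z: "\<chi>0 \<subseteq>\<^sub>m \<chi>" "\<tau>0 \<subseteq>\<^sub>m table u" "finite (dom \<chi>0)" "\<rho> \<subseteq>\<^sub>m bapp \<chi>0 \<tau>0"
      using bapp_finite_use[OF \<rho>(2,1)] by blast
    have "bapp \<chi>0 \<tau>0 \<subseteq>\<^sub>m bapp \<chi>0 (table u)" using z(2) by (intro bapp_mono) simp_all
    then have "\<rho> \<subseteq>\<^sub>m bapp \<chi>0 (table u)" using z(4) map_le_trans by blast
    then have "emb_mem (bapp \<chi>0 (table u)) n" using emb_mem_mono \<rho>(3) by blast
    then have "emb_mem \<chi>0 c" using c False h(1) nz by (simp add: emb_mem_prod_encode)
    then show ?thesis using z by blast
  qed
qed

definition emb :: "(nat \<Rightarrow> nat option) \<Rightarrow> nat set" where "emb \<chi> = {c. emb_mem \<chi> c}"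

lemma emb_mem_graph: "emb_mem \<chi> (prod_encode (prod_encode (a, b), 1)) \<longleftrightarrow> \<chi> a = Some b"
  by (simp add: emb_mem_prod_encode)

lemma table_of_finite:
  assumes "finite (dom \<sigma>)"
  shows "\<exists>u. even u \<and> table u = \<sigma> \<and> (\<forall>i\<in>set_decode u. \<exists>a b. \<sigma> a = Some b
    \<and> i = prod_encode (prod_encode (a, b), 1))"
proof -
  define S where "S = (\<lambda>a. prod_encode (prod_encode (a, the (\<sigma> a)), 1)) ` dom \<sigma>"
  have finS: "finite S" using assms by (simp add: S_def)
  have memS: "prod_encode (prod_encode (a, b), 1) \<in> S \<longleftrightarrow> \<sigma> a = Some b" for a b
  proof
    assume "\<sigma> a = Some b"
    then have "a \<in> dom \<sigma>" and "b = the (\<sigma> a)" by auto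
    then show "prod_encode (prod_encode (a, b), 1) \<in> S" unfolding S_def by blast
  qed (auto simp: S_def)
  have "0 \<notin> S" by (auto simp: S_def)
  then have ev: "even (set_encode S)" using finS set_decode_0[of "set_encode S"] by simp
  have "table (set_encode S) = \<sigma>"
  proof
    fix a
    show "table (set_encode S) a = \<sigma> a"
    proof (cases "\<sigma> a")
      case None
      then show ?thesis using memS finS by (simp add: table_def)
    next
      case (Some b)
      then have "table_rel (set_encode S) a b" using memS finS by (auto simp: table_rel_def)
      then show ?thesis using Some by (simp add: table_rel_iff)
    qed
  qed
  moreover have "\<forall>i\<in>set_decode (set_encode S). \<exists>a b. \<sigma> a = Some b
    \<and> i = prod_encode (prod_encode (a, b), 1)"
    using finS by (auto simp: S_def)
  ultimately show ?thesis using ev by blast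
qed

lemma table_le:
  assumes "set_decode u \<subseteq> emb \<psi>" shows "table u \<subseteq>\<^sub>m \<psi>"
  unfolding map_le_def
proof
  fix a assume "a \<in> dom (table u)"
  then obtain b where b: "table u a = Some b" by blast
  then have "prod_encode (prod_encode (a, b), 1) \<in> set_decode u"
    by (simp add: table_rel_iff[symmetric] table_rel_def)
  then have "\<psi> a = Some b" using assms emb_mem_graph by (auto simp: emb_def)
  then show "table u a = \<psi> a" using b by simp
qed

lemma emb_mem_bapp_table:
  assumes m: "emb_mem (bapp \<phi> \<psi>) n"
  shows "\<exists>u. set_decode u \<subseteq> emb \<psi> \<and> emb_mem \<phi> (prod_encode (n, u))"
proof -
  obtain \<rho> where \<rho>: "\<rho> \<subseteq>\<^sub>m bapp \<phi> \<psi>" "finite (dom \<rho>)" "emb_mem \<rho> n" using emb_mem_finite[OF m] by blast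
  obtain \<chi>0 \<tau>0 where z: "\<chi>0 \<subseteq>\<^sub>m \<phi>" "\<tau>0 \<subseteq>\<^sub>m \<psi>" "finite (dom \<tau>0)" "\<rho> \<subseteq>\<^sub>m bapp \<chi>0 \<tau>0"
    using bapp_finite_use[OF \<rho>(2,1)] by blast
  have "bapp \<chi>0 \<tau>0 \<subseteq>\<^sub>m bapp \<phi> \<tau>0" using z(1) by (rule bapp_mono) simp
  then have m0: "emb_mem (bapp \<phi> \<tau>0) n" using z(4) \<rho>(3) emb_mem_mono map_le_trans by blast
  obtain u where u: "even u" "table u = \<tau>0"
    "\<forall>i\<in>set_decode u. \<exists>a b. \<tau>0 a = Some b \<and> i = prod_encode (prod_encode (a, b), 1)"
    using table_of_finite[OF z(3)] by blast
  have "set_decode u \<subseteq> emb \<psi>"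
  proof
    fix i assume "i \<in> set_decode u"
    then obtain a b where ab: "\<tau>0 a = Some b" "i = prod_encode (prod_encode (a, b), 1)" using u(3) by blast
    then have "\<psi> a = Some b" using z(2) by (force simp: map_le_def)
    then show "i \<in> emb \<psi>" using ab(2) emb_mem_graph by (simp add: emb_def)
  qed
  moreover have "n \<noteq> 0" using m by (metis emb_mem_0)
  then have "emb_mem \<phi> (prod_encode (n, u))" using m0 u by (auto simp: emb_mem_prod_encode)
  ultimately show ?thesis by blast
qed

text \<open>Application in the graph model only looks at the finite subsets of emb \<psi>; the graph codes in
  such a subset form a finite table below \<psi>, and by continuity of application in B^X these tables
  suffice.\<close>

lemma gapp_emb: "gapp (emb \<phi>) (emb \<psi>) = emb (bapp \<phi> \<psi>)"
proof (intro set_eqI iffI)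
  fix n assume "n \<in> gapp (emb \<phi>) (emb \<psi>)"
  then obtain u where u: "emb_mem \<phi> (prod_encode (n, u))" "set_decode u \<subseteq> emb \<psi>"
    by (auto simp: gapp_def D_eq emb_def)
  have "u \<noteq> 1"
  proof
    assume "u = 1"
    then have "0 \<in> emb \<psi>" using u(2) by auto
    then show False by (simp add: emb_def)
  qed
  then have "emb_mem (bapp \<phi> (table u)) n" using u(1) by (simp add: emb_mem_prod_encode)
  moreover have "bapp \<phi> (table u) \<subseteq>\<^sub>m bapp \<phi> \<psi>" by (rule bapp_mono) (simp_all add: table_le[OF u(2)])
  ultimately show "n \<in> emb (bapp \<phi> \<psi>)" using emb_mem_mono by (auto simp: emb_def)
next
  fix n assume "n \<in> emb (bapp \<phi> \<psi>)"
  then have "emb_mem (bapp \<phi> \<psi>) n" by (simp add: emb_def)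
  then obtain u where "set_decode u \<subseteq> emb \<psi>" "emb_mem \<phi> (prod_encode (n, u))"
    using emb_mem_bapp_table by blast
  then show "n \<in> gapp (emb \<phi>) (emb \<psi>)" by (auto simp: emb_def gapp_def D_eq)
qed

lemma emb_inject: assumes "emb \<phi> = emb \<phi>'" shows "\<phi> = \<phi>'"
proof
  fix a
  have h: "\<phi> a = Some b \<longleftrightarrow> \<phi>' a = Some b" for b
    using assms emb_mem_graph[of \<phi> a b] emb_mem_graph[of \<phi>' a b] by (auto simp: emb_def set_eq_iff)
  show "\<phi> a = \<phi>' a"
  proof (cases "\<phi> a")
    case None
    then show ?thesis using h by (cases "\<phi>' a") auto
  next
    case (Some b)
    then show ?thesis using h by simp
  qed
qed

text \<open>For \<phi> = Phi (chi X) e0 the set emb \<phi> is enumerated from join_compl X by an inductive system on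
  coded facts. A context d is 0, standing for the oracle chi X, or Suc (cons_code u s), standing for
  pjoin (apply_tables \<phi> s) (table u). The facts are ev_fact d e xs y (program e on xs yields y relative
  to context d), app_fact s a b (apply_tables \<phi> s a = Some b) and mem_fact s c (emb_mem
  (apply_tables \<phi> s) c), where s codes a list of table codes (s = 0 is the empty list). Axioms
  from join_compl X only answer oracle queries in context 0.\<close>

definition "cons_code x l = Suc (prod_encode (x, l))"
definition "ev_fact d e xs y = prod_encode (0, prod_encode (d, prod_encode (e, prod_encode (xs, y))))"
definition "app_fact s a b = prod_encode (1, prod_encode (s, prod_encode (a, b)))"
definition "mem_fact s c = prod_encode (2, prod_encode (s, c))"

lemma list_decode_cons_code[simp]: "list_decode (cons_code x l) = x # list_decode l"
  by (simp add: cons_code_def)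

lemma list_encode_Cons: "list_encode (x # xs) = cons_code x (list_encode xs)"
  by (simp add: cons_code_def)

definition oracle_rule :: "nat \<Rightarrow> nat \<Rightarrow> nat \<Rightarrow> nat \<Rightarrow> nat \<Rightarrow> bool" where
  "oracle_rule d q y w u \<longleftrightarrow>
     (d = 0 \<and> ((y = 1 \<and> 2 * q \<in> set_decode u) \<or> (y = 0 \<and> 2 * q + 1 \<in> set_decode u))) \<or>
     (\<exists>uu s. d = Suc (cons_code uu s) \<and> ((even q \<and> app_fact s (q div 2) y \<in> set_decode w)
       \<or> (odd q \<and> table_rel uu (q div 2) y)))"

definition ev_rule :: "nat \<Rightarrow> nat \<Rightarrow> nat \<Rightarrow> nat \<Rightarrow> nat \<Rightarrow> nat \<Rightarrow> bool" where
  "ev_rule d e xs y w u \<longleftrightarrow>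
     (e mod 7 = 0 \<and> y = 0) \<or>
     (e mod 7 = 1 \<and> y = Suc (arg 0 (list_decode xs))) \<or>
     (e mod 7 = 2 \<and> y = arg (e div 7) (list_decode xs)) \<or>
     (e mod 7 = 3 \<and> (\<exists>ys. length (list_decode ys) = length (list_decode (pd2 (e div 7))) \<and>
         (\<forall>j<length (list_decode ys). ev_fact d (arg j (list_decode (pd2 (e div 7)))) xs
           (arg j (list_decode ys)) \<in> set_decode w) \<and>
         ev_fact d (pd1 (e div 7)) ys y \<in> set_decode w)) \<or>
     (e mod 7 = 4 \<and> (\<exists>xs'. xs = cons_code 0 xs' \<and> ev_fact d (pd1 (e div 7)) xs' y \<in> set_decode w)) \<or>
     (e mod 7 = 4 \<and> (\<exists>n xs' y'. xs = cons_code (Suc n) xs'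
       \<and> ev_fact d e (cons_code n xs') y' \<in> set_decode w \<and>
         ev_fact d (pd2 (e div 7)) (cons_code n (cons_code y' xs')) y \<in> set_decode w)) \<or>
     (e mod 7 = 5 \<and> ev_fact d (e div 7) (cons_code y xs) 0 \<in> set_decode w \<and>
         (\<forall>m<y. \<exists>z. z \<noteq> 0 \<and> ev_fact d (e div 7) (cons_code m xs) z \<in> set_decode w)) \<or>
     (e mod 7 = 6 \<and> oracle_rule d (arg 0 (list_decode xs)) y w u)"

definition emb_rule :: "nat \<Rightarrow> nat \<Rightarrow> nat \<Rightarrow> nat \<Rightarrow> bool" where
  "emb_rule e0 x w u \<longleftrightarrow>
     (\<exists>d e xs y. x = ev_fact d e xs y \<and> ev_rule d e xs y w u) \<or>
     (\<exists>a b. x = app_fact 0 a b \<and> ev_fact 0 e0 (cons_code a 0) b \<in> set_decode w) \<or>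
     (\<exists>uu s a b e. x = app_fact (cons_code uu s) a b \<and> app_fact s 0 e \<in> set_decode w \<and>
        ev_fact (Suc (cons_code uu s)) e (cons_code a 0) b \<in> set_decode w) \<or>
     (\<exists>s a b. x = mem_fact s (prod_encode (prod_encode (a, b), 1)) \<and> app_fact s a b \<in> set_decode w) \<or>
     (\<exists>s n uu. x = mem_fact s (prod_encode (n, uu)) \<and> even uu \<and> prod_encode (n, uu) \<noteq> 0 \<and>
        mem_fact (cons_code uu s) n \<in> set_decode w)"

lemma sigma1_emb_rule: "sigma1 (\<lambda>m. emb_rule e0 (pd1 m) (pd1 (pd2 m)) (pd2 (pd2 m)))"
  unfolding emb_rule_def ev_rule_def oracle_rule_def table_rel_def ev_fact_def app_fact_def
    mem_fact_def cons_code_def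
  by (intro sigma1_intros sigma1_prim_rec_pred prim_rec_pred_intros prim_rec_intros)

definition context_oracle :: "nat set \<Rightarrow> (nat \<Rightarrow> nat option) \<Rightarrow> nat \<Rightarrow> nat \<Rightarrow> nat option" where
  "context_oracle X \<phi> d = (if d = 0 then chi X else pjoin
    (apply_tables \<phi> (list_decode (pd2 (d - 2)))) (table (pd1 (d - 2))))"

lemma context_oracle_0[simp]: "context_oracle X \<phi> 0 = chi X" by (simp add: context_oracle_def)
lemma context_oracle_cons[simp]:
  "context_oracle X \<phi> (Suc (cons_code uu s)) = pjoin (apply_tables \<phi> (list_decode s)) (table uu)"
  by (simp add: context_oracle_def cons_code_def)

definition fact_holds :: "nat set \<Rightarrow> nat \<Rightarrow> nat \<Rightarrow> bool" where
  "fact_holds X e0 x = (let \<phi> = Phi (chi X) e0; t = pd1 x; r = pd2 x in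
     if t = 0 then ev (context_oracle X \<phi> (pd1 r)) (pd1 (pd2 r)) (list_decode (pd1 (pd2 (pd2 r))))
       (pd2 (pd2 (pd2 r)))
     else if t = 1 then apply_tables \<phi> (list_decode (pd1 r)) (pd1 (pd2 r)) = Some (pd2 (pd2 r))
     else if t = 2 then emb_mem (apply_tables \<phi> (list_decode (pd1 r))) (pd2 r) else False)"

lemma fact_holds_ev_fact[simp]:
  "fact_holds X e0 (ev_fact d e xs y) = ev (context_oracle X (Phi (chi X) e0) d) e (list_decode xs) y"
  by (simp add: fact_holds_def ev_fact_def)
lemma fact_holds_app_fact[simp]:
  "fact_holds X e0 (app_fact s a b) = (apply_tables (Phi (chi X) e0) (list_decode s) a = Some b)"
  by (simp add: fact_holds_def app_fact_def)
lemma fact_holds_mem_fact[simp]: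
  "fact_holds X e0 (mem_fact s c) = emb_mem (apply_tables (Phi (chi X) e0) (list_decode s)) c"
  by (simp add: fact_holds_def mem_fact_def)

lemma join_compl_even: "2 * q \<in> join_compl X \<longleftrightarrow> q \<in> X"
  by (auto simp: join_compl_def) presburger+
lemma join_compl_odd: "2 * q + 1 \<in> join_compl X \<longleftrightarrow> q \<notin> X"
  by (auto simp: join_compl_def) presburger+

lemma prod_decode_split: "prod_decode c = (pd1 c, pd2 c)" by simp

lemma oracle_rule_sound:
  assumes R: "oracle_rule d q y w u"
    and W: "\<And>j. j \<in> set_decode w \<Longrightarrow> fact_holds X e0 j"
    and U: "set_decode u \<subseteq> join_compl X"
  shows "context_oracle X (Phi (chi X) e0) d q = Some y"
  using R unfolding oracle_rule_def
proof (elim disjE conjE exE)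
  assume "d = 0" "y = 1" "2 * q \<in> set_decode u"
  then have "q \<in> X" using U join_compl_even by blast
  then show ?thesis using \<open>d = 0\<close> \<open>y = 1\<close> by (simp add: chi_def)
next
  assume "d = 0" "y = 0" "2 * q + 1 \<in> set_decode u"
  then have "q \<notin> X" using U join_compl_odd by blast
  then show ?thesis using \<open>d = 0\<close> \<open>y = 0\<close> by (simp add: chi_def)
next
  fix uu s assume "d = Suc (cons_code uu s)" "even q" "app_fact s (q div 2) y \<in> set_decode w"
  then show ?thesis using W by (fastforce simp: pjoin_even)
next
  fix uu s assume "d = Suc (cons_code uu s)" "odd q" "table_rel uu (q div 2) y"
  then show ?thesis by (simp add: pjoin_odd table_rel_iff)
qed

lemma ev_rule_sound:
  assumes R: "ev_rule d e xs y w u"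
    and W: "\<And>j. j \<in> set_decode w \<Longrightarrow> fact_holds X e0 j"
    and U: "set_decode u \<subseteq> join_compl X"
  shows "ev (context_oracle X (Phi (chi X) e0) d) e (list_decode xs) y"
proof -
  let ?g = "context_oracle X (Phi (chi X) e0) d"
  from R show ?thesis unfolding ev_rule_def
  proof (elim disjE conjE exE)
    assume "e mod 7 = 0" "y = 0" then show ?thesis by (simp add: ev.ev_zero)
  next
    assume "e mod 7 = 1" "y = Suc (arg 0 (list_decode xs))" then show ?thesis by (simp add: ev.ev_suc)
  next
    assume "e mod 7 = 2" "y = arg (e div 7) (list_decode xs)" then show ?thesis by (simp add: ev.ev_proj)
  next
    fix ys
    assume h: "e mod 7 = 3" "length (list_decode ys) = length (list_decode (pd2 (e div 7)))"
      "\<forall>j<length (list_decode ys). ev_fact d (arg j (list_decode (pd2 (e div 7)))) xs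
        (arg j (list_decode ys)) \<in> set_decode w"
      "ev_fact d (pd1 (e div 7)) ys y \<in> set_decode w"
    have "list_all2 (\<lambda>q y. ev ?g q (list_decode xs) y) (list_decode (pd2 (e div 7))) (list_decode ys)"
      unfolding list_all2_conv_all_nth
    proof (intro conjI allI impI)
      fix j assume j: "j < length (list_decode (pd2 (e div 7)))"
      then have "ev_fact d (arg j (list_decode (pd2 (e div 7)))) xs (arg j (list_decode ys)) \<in> set_decode w"
        using h(2,3) by simp
      then have "fact_holds X e0 (ev_fact d (arg j (list_decode (pd2 (e div 7)))) xs
        (arg j (list_decode ys)))"
        by (rule W)
      then show "ev ?g (list_decode (pd2 (e div 7)) ! j) (list_decode xs) (list_decode ys ! j)"
        using j h(2) by (simp add: arg_def)
    qed (use h in simp)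
    moreover have "ev ?g (pd1 (e div 7)) (list_decode ys) y" using W[OF h(4)] by simp
    ultimately show ?thesis
      by - (rule ev.ev_comp[OF h(1) prod_decode_split], assumption+)
  next
    fix xs'
    assume h: "e mod 7 = 4" "xs = cons_code 0 xs'" "ev_fact d (pd1 (e div 7)) xs' y \<in> set_decode w"
    have "ev ?g (pd1 (e div 7)) (list_decode xs') y" using W[OF h(3)] by simp
    then show ?thesis using h(2) by (simp add: ev.ev_pr0[OF h(1) prod_decode_split])
  next
    fix n xs' y'
    assume h: "e mod 7 = 4" "xs = cons_code (Suc n) xs'" "ev_fact d e (cons_code n xs') y' \<in> set_decode w"
       "ev_fact d (pd2 (e div 7)) (cons_code n (cons_code y' xs')) y \<in> set_decode w"
    have a: "ev ?g e (n # list_decode xs') y'" using W[OF h(3)] by simp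
    have b: "ev ?g (pd2 (e div 7)) (n # y' # list_decode xs') y" using W[OF h(4)] by simp
    show ?thesis using h(2) ev.ev_prS[OF h(1) prod_decode_split a b] by simp
  next
    assume h: "e mod 7 = 5" "ev_fact d (e div 7) (cons_code y xs) 0 \<in> set_decode w"
      "\<forall>m<y. \<exists>z. z \<noteq> 0 \<and> ev_fact d (e div 7) (cons_code m xs) z \<in> set_decode w"
    have a: "ev ?g (e div 7) (y # list_decode xs) 0" using W[OF h(2)] by simp
    have b: "\<forall>m<y. \<exists>z. z \<noteq> 0 \<and> ev ?g (e div 7) (m # list_decode xs) z"
    proof (intro allI impI)
      fix m assume "m < y"
      then obtain z where "z \<noteq> 0" "ev_fact d (e div 7) (cons_code m xs) z \<in> set_decode w" using h(3)
        by blast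
      then show "\<exists>z. z \<noteq> 0 \<and> ev ?g (e div 7) (m # list_decode xs) z" using W by fastforce
    qed
    show ?thesis by (rule ev.ev_mu[OF h(1) a b])
  next
    assume "e mod 7 = 6" "oracle_rule d (arg 0 (list_decode xs)) y w u"
    then show ?thesis using oracle_rule_sound W U by (blast intro: ev.ev_oracle)
  qed
qed

lemma emb_rule_sound:
  assumes "x \<in> derivable (emb_rule e0) (join_compl X)"
  shows "fact_holds X e0 x"
  using assms
proof (induction rule: derivable.induct)
  case (derivableI x w u)
  have W: "\<And>j. j \<in> set_decode w \<Longrightarrow> fact_holds X e0 j" using derivableI.IH by blast
  let ?\<phi> = "Phi (chi X) e0"
  from derivableI.hyps(1) show ?case unfolding emb_rule_def
  proof (elim disjE conjE exE)
    fix d e xs y assume "x = ev_fact d e xs y" "ev_rule d e xs y w u"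
    then show ?thesis using ev_rule_sound[OF _ W derivableI.hyps(2)] by simp
  next
    fix a b assume h: "x = app_fact 0 a b" "ev_fact 0 e0 (cons_code a 0) b \<in> set_decode w"
    have "ev (chi X) e0 [a] b" using W[OF h(2)] by simp
    then show ?thesis using h(1) by (simp add: Phi_Some)
  next
    fix uu s a b e assume h: "x = app_fact (cons_code uu s) a b" "app_fact s 0 e \<in> set_decode w"
      "ev_fact (Suc (cons_code uu s)) e (cons_code a 0) b \<in> set_decode w"
    have e: "apply_tables ?\<phi> (list_decode s) 0 = Some e" using W[OF h(2)] by simp
    have "ev (pjoin (apply_tables ?\<phi> (list_decode s)) (table uu)) e [a] b" using W[OF h(3)] by simp
    then show ?thesis using h(1) e by (simp add: bapp_def Phi_Some)
  next
    fix s a b assume h: "x = mem_fact s (prod_encode (prod_encode (a, b), 1))" "app_fact s a b \<in>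
      set_decode w"
    have "apply_tables ?\<phi> (list_decode s) a = Some b" using W[OF h(2)] by simp
    then show ?thesis using h(1) by (simp add: emb_mem_prod_encode)
  next
    fix s n uu assume h: "x = mem_fact s (prod_encode (n, uu))" "even uu" "prod_encode (n, uu) \<noteq> 0"
      "mem_fact (cons_code uu s) n \<in> set_decode w"
    have "emb_mem (bapp (apply_tables ?\<phi> (list_decode s)) (table uu)) n" using W[OF h(4)] by simp
    moreover have "uu \<noteq> 1" using h(2) by auto
    ultimately show ?thesis using h by (simp add: emb_mem_prod_encode)
  qed
qed

lemma ev_fact_derivableI:
  assumes "ev_rule d e xs y w u" "set_decode w \<subseteq> derivable (emb_rule e0) Og" "set_decode u \<subseteq> Og"
  shows "ev_fact d e xs y \<in> derivable (emb_rule e0) Og"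
proof (rule derivableI[of _ _ w u])
  show "emb_rule e0 (ev_fact d e xs y) w u" unfolding emb_rule_def using assms(1) by blast
qed (use assms in auto)

lemma emb_rule_derive: "emb_rule e0 x w u \<Longrightarrow> set_decode w \<subseteq> derivable (emb_rule e0) Og
  \<Longrightarrow> set_decode u \<subseteq> Og \<Longrightarrow> x \<in> derivable (emb_rule e0) Og"
  by (rule derivableI) auto

lemma ev_fact_comp_derivable:
  assumes e: "e mod 7 = 3" "prod_decode (e div 7) = (p, qc)"
    and args: "list_all2 (\<lambda>q y. ev_fact d q (list_encode xs) y \<in> derivable (emb_rule e0) Og)
      (list_decode qc) ys"
    and outer: "ev_fact d p (list_encode ys) z \<in> derivable (emb_rule e0) Og"
  shows "ev_fact d e (list_encode xs) z \<in> derivable (emb_rule e0) Og"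
proof -
  define F where "F = insert (ev_fact d p (list_encode ys) z)
     ((\<lambda>j. ev_fact d (list_decode qc ! j) (list_encode xs) (ys ! j)) ` {..<length ys})"
  have len: "length ys = length (list_decode qc)" using args by (simp add: list_all2_lengthD)
  have pq: "pd1 (e div 7) = p" "pd2 (e div 7) = qc" using e(2) by simp_all
  have "F \<subseteq> derivable (emb_rule e0) Og"
    using args outer len by (auto simp: F_def list_all2_conv_all_nth)
  moreover have "ev_rule d e (list_encode xs) z (set_encode F) 0"
  proof -
    have "\<forall>j<length ys. ev_fact d (arg j (list_decode qc)) (list_encode xs) (arg j ys) \<in> F"
      using len by (auto simp: F_def arg_def)
    then have "e mod 7 = 3 \<and> (\<exists>ys'. length (list_decode ys') = length (list_decode (pd2 (e div 7))) \<and>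
         (\<forall>j<length (list_decode ys'). ev_fact d (arg j (list_decode (pd2 (e div 7)))) (list_encode xs)
            (arg j (list_decode ys')) \<in> set_decode (set_encode F)) \<and>
         ev_fact d (pd1 (e div 7)) ys' z \<in> set_decode (set_encode F))"
      using e(1) pq len by (intro conjI exI[of _ "list_encode ys"]) (auto simp: F_def)
    then show ?thesis unfolding ev_rule_def by blast
  qed
  moreover have "finite F" by (simp add: F_def)
  ultimately show ?thesis by (intro ev_fact_derivableI[of _ _ _ _ "set_encode F" 0]) auto
qed

lemma ev_fact_mu_derivable:
  assumes e: "e mod 7 = 5"
    and zero: "ev_fact d (e div 7) (list_encode (n # xs)) 0 \<in> derivable (emb_rule e0) Og"
    and below: "\<forall>m<n. \<exists>z. z \<noteq> 0 \<and> ev_fact d (e div 7) (list_encode (m # xs)) z \<in> derivable (emb_rule e0) Og"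
  shows "ev_fact d e (list_encode xs) n \<in> derivable (emb_rule e0) Og"
proof -
  obtain Zf where Zf: "\<forall>m<n. Zf m \<noteq> 0 \<and> ev_fact d (e div 7) (list_encode (m # xs)) (Zf m) \<in>
    derivable (emb_rule e0) Og"
    using below by metis
  define F where "F = insert (ev_fact d (e div 7) (cons_code n (list_encode xs)) 0)
     ((\<lambda>m. ev_fact d (e div 7) (cons_code m (list_encode xs)) (Zf m)) ` {..<n})"
  have "F \<subseteq> derivable (emb_rule e0) Og" using Zf zero by (auto simp: F_def cons_code_def)
  moreover have "ev_rule d e (list_encode xs) n (set_encode F) 0"
  proof -
    have "\<forall>m<n. \<exists>z. z \<noteq> 0 \<and> ev_fact d (e div 7) (cons_code m (list_encode xs)) z \<in> F"
      using Zf by (auto simp: F_def)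
    then show ?thesis unfolding ev_rule_def using e by (auto simp: F_def)
  qed
  moreover have "finite F" by (simp add: F_def)
  ultimately show ?thesis by (intro ev_fact_derivableI[of _ _ _ _ "set_encode F" 0]) auto
qed

lemma ev_fact_derivable:
  assumes "ev g e xs y"
    and context_oracle: "\<forall>q z. g q = Some z \<longrightarrow>
      (\<exists>w u. oracle_rule d q z w u \<and> set_decode w \<subseteq> derivable (emb_rule e0) Og \<and> set_decode u \<subseteq> Og)"
  shows "ev_fact d e (list_encode xs) y \<in> derivable (emb_rule e0) Og"
  using assms(1)
proof (induction rule: ev.induct)
  case (ev_zero e xs)
  show ?case by (rule ev_fact_derivableI[of _ _ _ _ 0 0]) (use ev_zero in \<open>auto simp: ev_rule_def\<close>)
next
  case (ev_suc e xs)
  show ?case by (rule ev_fact_derivableI[of _ _ _ _ 0 0]) (use ev_suc in \<open>auto simp: ev_rule_def\<close>)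
next
  case (ev_proj e xs)
  show ?case by (rule ev_fact_derivableI[of _ _ _ _ 0 0]) (use ev_proj in \<open>auto simp: ev_rule_def\<close>)
next
  case (ev_comp e p qc xs ys z)
  show ?case
    by (rule ev_fact_comp_derivable[OF ev_comp.hyps(1,2)]) (use ev_comp.IH in \<open>auto elim: list_all2_mono\<close>)
next
  case (ev_pr0 e p q xs y)
  have "e mod 7 = 4 \<and> (\<exists>xs'. list_encode (0 # xs) = cons_code 0 xs'
    \<and> ev_fact d (pd1 (e div 7)) xs' y \<in> set_decode (set_encode {ev_fact d p (list_encode xs) y}))"
    using ev_pr0.hyps(1,2) by (intro conjI exI[of _ "list_encode xs"]) (simp_all add: cons_code_def)
  then have "ev_rule d e (list_encode (0 # xs)) y (set_encode {ev_fact d p (list_encode xs) y}) 0"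
    unfolding ev_rule_def by blast
  then show ?case using ev_pr0.IH by (intro ev_fact_derivableI) auto
next
  case (ev_prS e p q n xs y z)
  let ?W = "set_encode {ev_fact d e (cons_code n (list_encode xs)) y, ev_fact d q
    (cons_code n (cons_code y (list_encode xs))) z}"
  have "e mod 7 = 4 \<and> (\<exists>n' xs' y'. list_encode (Suc n # xs) = cons_code (Suc n') xs'
    \<and> ev_fact d e (cons_code n' xs') y' \<in> set_decode ?W \<and>
         ev_fact d (pd2 (e div 7)) (cons_code n' (cons_code y' xs')) z \<in> set_decode ?W)"
    using ev_prS.hyps(1,2) by (intro conjI exI[of _ n] exI[of _ "list_encode xs"] exI[of _ y])
      (simp_all add: cons_code_def)
  then have "ev_rule d e (list_encode (Suc n # xs)) z ?W 0"
    unfolding ev_rule_def by blast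
  then show ?case using ev_prS.IH by (intro ev_fact_derivableI) (auto simp: cons_code_def)
next
  case (ev_mu e n xs)
  show ?case by (rule ev_fact_mu_derivable[OF ev_mu.hyps(1)]) (use ev_mu.IH in auto)
next
  case (ev_oracle e xs y)
  obtain w u where "oracle_rule d (arg 0 xs) y w u" "set_decode w \<subseteq> derivable (emb_rule e0) Og"
    "set_decode u \<subseteq> Og"
    using context_oracle ev_oracle.hyps(2) by blast
  then show ?case using ev_oracle.hyps(1) by (intro ev_fact_derivableI[of _ _ _ _ w u])
    (auto simp: ev_rule_def)
qed

lemma emb_rule_app_base: "ev_fact 0 e0 (cons_code a 0) b \<in> set_decode w
  \<Longrightarrow> emb_rule e0 (app_fact 0 a b) w u"
  unfolding emb_rule_def by blast
lemma emb_rule_app_step: "app_fact s 0 e \<in> set_decode w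
  \<Longrightarrow> ev_fact (Suc (cons_code uu s)) e (cons_code a 0) b \<in> set_decode w
  \<Longrightarrow> emb_rule e0 (app_fact (cons_code uu s) a b) w u"
  unfolding emb_rule_def by blast
lemma emb_rule_mem_graph: "app_fact s a b \<in> set_decode w
  \<Longrightarrow> emb_rule e0 (mem_fact s (prod_encode (prod_encode (a, b), 1))) w u"
  unfolding emb_rule_def by blast
lemma emb_rule_mem_app: "even uu \<Longrightarrow> prod_encode (n, uu) \<noteq> 0
  \<Longrightarrow> mem_fact (cons_code uu s) n \<in> set_decode w \<Longrightarrow> emb_rule e0 (mem_fact s (prod_encode (n, uu))) w u"
  unfolding emb_rule_def by blast

lemma oracle_rule_chi:
  assumes "chi X q = Some z"
  shows "\<exists>w u. oracle_rule 0 q z w u \<and> set_decode w \<subseteq> derivable (emb_rule e0) (join_compl X)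
    \<and> set_decode u \<subseteq> join_compl X"
proof (cases "q \<in> X")
  case True
  then have "z = 1" using assms by (simp add: chi_def)
  moreover have "2 * q \<in> join_compl X" using True join_compl_even by blast
  ultimately show ?thesis unfolding oracle_rule_def
    by (intro exI[of _ 0] exI[of _ "set_encode {2 * q}"]) simp
next
  case False
  then have "z = 0" using assms by (simp add: chi_def)
  moreover have "2 * q + 1 \<in> join_compl X" using False join_compl_odd by blast
  ultimately show ?thesis unfolding oracle_rule_def
    by (intro exI[of _ 0] exI[of _ "set_encode {2 * q + 1}"]) simp
qed

lemma oracle_rule_table:
  assumes IH: "\<And>a b. apply_tables \<phi> s a = Some b
    \<Longrightarrow> app_fact (list_encode s) a b \<in> derivable (emb_rule e0) Og"
    and h: "pjoin (apply_tables \<phi> s) (table uu) q = Some z"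
  shows "\<exists>w u. oracle_rule (Suc (cons_code uu (list_encode s))) q z w u
    \<and> set_decode w \<subseteq> derivable (emb_rule e0) Og \<and> set_decode u \<subseteq> Og"
proof (cases "even q")
  case True
  then have "apply_tables \<phi> s (q div 2) = Some z" using h by (simp add: pjoin_even)
  then have "app_fact (list_encode s) (q div 2) z \<in> derivable (emb_rule e0) Og" by (rule IH)
  then show ?thesis unfolding oracle_rule_def using True
    by (intro exI[of _ "set_encode {app_fact (list_encode s) (q div 2) z}"] exI[of _ 0]) auto
next
  case False
  then have "table_rel uu (q div 2) z" using h by (simp add: pjoin_odd table_rel_iff)
  then show ?thesis unfolding oracle_rule_def using False by (intro exI[of _ 0] exI[of _ 0]) auto
qed

lemma app_fact_derivable:
  "apply_tables (Phi (chi X) e0) s a = Some b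
    \<Longrightarrow> app_fact (list_encode s) a b \<in> derivable (emb_rule e0) (join_compl X)"
proof (induction s arbitrary: a b)
  case Nil
  then have "ev (chi X) e0 [a] b" by (simp add: Phi_Some)
  then have "ev_fact 0 e0 (list_encode [a]) b \<in> derivable (emb_rule e0) (join_compl X)"
    by (rule ev_fact_derivable) (use oracle_rule_chi in blast)
  then have ev: "ev_fact 0 e0 (cons_code a 0) b \<in> derivable (emb_rule e0) (join_compl X)"
    by (simp add: cons_code_def)
  show ?case
  proof (rule emb_rule_derive[of _ _ "set_encode {ev_fact 0 e0 (cons_code a 0) b}" 0])
    show "emb_rule e0 (app_fact (list_encode []) a b) (set_encode {ev_fact 0 e0 (cons_code a 0) b}) 0"
      by (simp add: emb_rule_app_base)
  qed (use ev in auto)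
next
  case (Cons uu s)
  let ?\<phi> = "Phi (chi X) e0"
  obtain e where e: "apply_tables ?\<phi> s 0 = Some e" "Phi (pjoin (apply_tables ?\<phi> s) (table uu)) e a = Some b"
    using Cons.prems by (auto simp: bapp_def split: option.splits)
  have ev: "ev (pjoin (apply_tables ?\<phi> s) (table uu)) e [a] b" using e(2) by (simp add: Phi_Some)
  have "ev_fact (Suc (cons_code uu (list_encode s))) e (list_encode [a]) b \<in> derivable (emb_rule e0)
    (join_compl X)"
    by (rule ev_fact_derivable[OF ev]) (use oracle_rule_table[OF Cons.IH] in blast)
  then have f1: "ev_fact (Suc (cons_code uu (list_encode s))) e (cons_code a 0) b \<in> derivable
    (emb_rule e0) (join_compl X)"
    by (simp add: cons_code_def)
  have f2: "app_fact (list_encode s) 0 e \<in> derivable (emb_rule e0) (join_compl X)"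
    using Cons.IH e(1) by blast
  show ?case
  proof (rule emb_rule_derive[of _ _ "set_encode
    {app_fact (list_encode s) 0 e, ev_fact (Suc (cons_code uu (list_encode s))) e (cons_code a 0)
    b}" 0])
    show "emb_rule e0 (app_fact (list_encode (uu # s)) a b)
      (set_encode {app_fact (list_encode s) 0 e, ev_fact (Suc (cons_code uu (list_encode s))) e
      (cons_code a 0) b}) 0"
      unfolding list_encode_Cons by (rule emb_rule_app_step[where e=e]) simp_all
  qed (use f1 f2 in auto)
qed

lemma mem_fact_derivable:
  "emb_mem (apply_tables (Phi (chi X) e0) s) c
    \<Longrightarrow> mem_fact (list_encode s) c \<in> derivable (emb_rule e0) (join_compl X)"
proof (induction c arbitrary: s rule: less_induct)
  case (less c)
  let ?\<phi> = "Phi (chi X) e0"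
  obtain n uu where c: "c = prod_encode (n, uu)" by (metis prod_decode_inverse surj_pair)
  have m: "emb_mem (apply_tables ?\<phi> s) (prod_encode (n, uu))" using less.prems c by simp
  then have nz: "prod_encode (n, uu) \<noteq> 0" by (simp add: emb_mem_prod_encode)
  show ?case
  proof (cases "uu = 1")
    case True
    then have "apply_tables ?\<phi> s (pd1 n) = Some (pd2 n)" using m by (simp add: emb_mem_prod_encode)
    then have f: "app_fact (list_encode s) (pd1 n) (pd2 n) \<in> derivable (emb_rule e0) (join_compl X)"
      by (rule app_fact_derivable)
    show ?thesis
    proof (rule emb_rule_derive[of _ _ "set_encode {app_fact (list_encode s) (pd1 n) (pd2 n)}" 0])
      have "c = prod_encode (prod_encode (pd1 n, pd2 n), 1)" using c True by simp
      then show "emb_rule e0 (mem_fact (list_encode s) c)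
        (set_encode {app_fact (list_encode s) (pd1 n) (pd2 n)}) 0"
        by (simp only:) (rule emb_rule_mem_graph, simp)
    qed (use f in auto)
  next
    case False
    then have h: "even uu" "emb_mem (apply_tables ?\<phi> (uu # s)) n" using m
      by (simp_all add: emb_mem_prod_encode)
    have "pd1 c < c" using c nz by (intro pd1_less) simp
    then have "n < c" using c by simp
    then have f: "mem_fact (list_encode (uu # s)) n \<in> derivable (emb_rule e0) (join_compl X)"
      using less.IH h(2) by blast
    show ?thesis
    proof (rule emb_rule_derive[of _ _ "set_encode {mem_fact (cons_code uu (list_encode s)) n}" 0])
      show "emb_rule e0 (mem_fact (list_encode s) c)
        (set_encode {mem_fact (cons_code uu (list_encode s)) n}) 0"
        unfolding c using h(1) nz by (rule emb_rule_mem_app) simp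
    qed (use f in \<open>auto simp: cons_code_def\<close>)
  qed
qed

lemma join_compl_empty: "join_compl {} = {x. odd x}"
  by (auto simp: join_compl_def) presburger

lemma ev_iff_derivable:
  "ev (chi X) e xs y \<longleftrightarrow> ev_fact 0 e (list_encode xs) y \<in> derivable (emb_rule e0) (join_compl X)"
proof
  assume "ev (chi X) e xs y"
  then show "ev_fact 0 e (list_encode xs) y \<in> derivable (emb_rule e0) (join_compl X)"
    by (rule ev_fact_derivable) (use oracle_rule_chi in blast)
next
  assume "ev_fact 0 e (list_encode xs) y \<in> derivable (emb_rule e0) (join_compl X)"
  then have "fact_holds X e0 (ev_fact 0 e (list_encode xs) y)" by (rule emb_rule_sound)
  then show "ev (chi X) e xs y" by simp
qed

lemma emb_iff_derivable:
  "c \<in> emb (Phi (chi X) e0) \<longleftrightarrow> mem_fact 0 c \<in> derivable (emb_rule e0) (join_compl X)"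
proof
  assume "c \<in> emb (Phi (chi X) e0)"
  then show "mem_fact 0 c \<in> derivable (emb_rule e0) (join_compl X)"
    using mem_fact_derivable[of X e0 "[]"] by (simp add: emb_def)
next
  assume "mem_fact 0 c \<in> derivable (emb_rule e0) (join_compl X)"
  then show "c \<in> emb (Phi (chi X) e0)" using emb_rule_sound by (fastforce simp: emb_def)
qed

section \<open>Kleene normal form\<close>

lemma ce_imp_sigma1:
  assumes "ce A" shows "sigma1 (\<lambda>n. n \<in> A)"
proof -
  obtain e where e: "A = {n. Phi (chi {}) e n \<noteq> None}" using assms unfolding ce_def by blast
  obtain Z where Z: "sigma1 (\<lambda>m. m \<in> Z)" "\<And>Og. derivable (emb_rule 0) Og =
    {x. \<exists>u. prod_encode (x, u) \<in> Z \<and> set_decode u \<subseteq> Og}"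
    using derivable_sigma1[OF sigma1_emb_rule] by blast
  have "n \<in> A \<longleftrightarrow> (\<exists>y u. prod_encode (ev_fact 0 e (cons_code n 0) y, u) \<in> Z
    \<and> (\<forall>i<u. i \<in> set_decode u \<longrightarrow> odd i))" for n
  proof -
    have "n \<in> A \<longleftrightarrow> (\<exists>y. ev (chi {}) e [n] y)" using e by (auto simp: Phi_Some)
    also have "\<dots> \<longleftrightarrow> (\<exists>y. ev_fact 0 e (cons_code n 0) y \<in> derivable (emb_rule 0) (join_compl {}))"
      using ev_iff_derivable[of "{}" e "[n]" _ 0] by (simp add: cons_code_def)
    also have "\<dots> \<longleftrightarrow> (\<exists>y u. prod_encode (ev_fact 0 e (cons_code n 0) y, u) \<in> Z
      \<and> (\<forall>i<u. i \<in> set_decode u \<longrightarrow> odd i))"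
      unfolding Z(2) join_compl_empty using set_decode_less by blast
    finally show ?thesis .
  qed
  moreover have "sigma1 (\<lambda>n. \<exists>y u. prod_encode (ev_fact 0 e (cons_code n 0) y, u) \<in> Z
    \<and> (\<forall>i<u. i \<in> set_decode u \<longrightarrow> odd i))"
    unfolding ev_fact_def cons_code_def
    by (intro sigma1_mem[OF Z(1)] sigma1_intros sigma1_prim_rec_pred prim_rec_pred_intros prim_rec_intros)
  ultimately show ?thesis by simp
qed

section \<open>Enumeration reducibility\<close>

lemma mem_gapp: "x \<in> gapp A B \<longleftrightarrow> (\<exists>u. prod_encode (x, u) \<in> A \<and> set_decode u \<subseteq> B)"
  by (simp add: gapp_def D_eq)

definition set_join :: "nat set \<Rightarrow> nat set \<Rightarrow> nat set" where
  "set_join A B = (\<lambda>a. 2 * a) ` A \<union> (\<lambda>b. 2 * b + 1) ` B"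

lemma set_join_iff: "x \<in> set_join A B \<longleftrightarrow> (even x \<and> x div 2 \<in> A) \<or> (odd x \<and> x div 2 \<in> B)"
proof -
  have "x \<in> (\<lambda>a. 2 * a) ` A \<longleftrightarrow> even x \<and> x div 2 \<in> A" by (auto elim!: evenE)
  moreover have "x \<in> (\<lambda>b. 2 * b + 1) ` B \<longleftrightarrow> odd x \<and> x div 2 \<in> B" by (auto elim!: oddE)
  ultimately show ?thesis by (simp add: set_join_def)
qed

lemma set_join_even [simp]: "2 * a \<in> set_join A B \<longleftrightarrow> a \<in> A"
  and set_join_odd [simp]: "2 * b + 1 \<in> set_join A B \<longleftrightarrow> b \<in> B"
  by (simp_all add: set_join_iff)

lemma join_compl_eq_set_join: "join_compl X = set_join X (- X)"
  by (auto simp: join_compl_def set_join_def)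

lemma ce_rel_iff_sigma1: "ce_rel R \<longleftrightarrow> sigma1 (\<lambda>m. R (pd1 m) (pd2 m))"
proof -
  have "{prod_encode (x, u) | x u. R x u} = {m. R (pd1 m) (pd2 m)}"
    by (auto simp: image_def) (metis prod.collapse prod_decode_inverse)
  then show ?thesis
    unfolding ce_rel_def using ce_imp_sigma1 sigma1_imp_ce by fastforce
qed

lemma le_e_iff_sigma1:
  "le_e A B \<longleftrightarrow> (\<exists>R. sigma1 (\<lambda>m. R (pd1 m) (pd2 m)) \<and> (\<forall>x. x \<in> A \<longleftrightarrow> (\<exists>u. R x u \<and> set_decode u \<subseteq> B)))"
  unfolding le_e_def ce_rel_iff_sigma1 D_eq ..

lemma le_e_sigma1I:
  assumes "sigma1 (\<lambda>m. R (pd1 m) (pd2 m))" and "\<And>x. x \<in> A \<longleftrightarrow> (\<exists>u. R x u \<and> set_decode u \<subseteq> B)"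
  shows "le_e A B"
  using assms unfolding le_e_iff_sigma1 by blast

lemma le_e_refl: "le_e A A"
proof (rule le_e_sigma1I[where R = "\<lambda>x u. x \<in> set_decode u"])
  show "sigma1 (\<lambda>m. pd1 m \<in> set_decode (pd2 m))"
    by (intro sigma1_prim_rec_pred prim_rec_pred_intros prim_rec_intros)
  show "x \<in> A \<longleftrightarrow> (\<exists>u. x \<in> set_decode u \<and> set_decode u \<subseteq> A)" for x
  proof
    assume "x \<in> A"
    then show "\<exists>u. x \<in> set_decode u \<and> set_decode u \<subseteq> A" by (intro exI[of _ "set_encode {x}"]) simp
  qed blast
qed

lemma ce_le_e:
  assumes "ce A" shows "le_e A B"
proof (rule le_e_sigma1I[where R = "\<lambda>x u. x \<in> A \<and> u = 0"])
  show "sigma1 (\<lambda>m. pd1 m \<in> A \<and> pd2 m = 0)"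
    by (intro sigma1_conj sigma1_mem[OF ce_imp_sigma1[OF assms]] sigma1_prim_rec_pred
        prim_rec_pred_intros prim_rec_intros)
qed auto

lemma le_e_trans:
  assumes "le_e A B" "le_e B C" shows "le_e A C"
proof -
  obtain RA where RA: "sigma1 (\<lambda>m. RA (pd1 m) (pd2 m))" "\<And>x. x \<in> A \<longleftrightarrow> (\<exists>u. RA x u \<and> set_decode u \<subseteq> B)"
    using assms(1) unfolding le_e_iff_sigma1 by blast
  obtain RB where RB: "sigma1 (\<lambda>m. RB (pd1 m) (pd2 m))" "\<And>x. x \<in> B \<longleftrightarrow> (\<exists>u. RB x u \<and> set_decode u \<subseteq> C)"
    using assms(2) unfolding le_e_iff_sigma1 by blast
  let ?R = "\<lambda>x w. \<exists>u. RA x u \<and> (\<forall>i<u. i \<notin> set_decode u \<or>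
    (\<exists>v. RB i v \<and> (\<forall>j<v. j \<in> set_decode v \<longrightarrow> j \<in> set_decode w)))"
  show ?thesis
  proof (rule le_e_sigma1I[where R = ?R])
    show "sigma1 (\<lambda>m. ?R (pd1 m) (pd2 m))"
      by (intro sigma1_intros sigma1_rel2[OF RA(1)] sigma1_rel2[OF RB(1)] sigma1_prim_rec_pred
          prim_rec_pred_intros prim_rec_intros)
    show "x \<in> A \<longleftrightarrow> (\<exists>w. ?R x w \<and> set_decode w \<subseteq> C)" for x
    proof
      assume "x \<in> A"
      then obtain u where u: "RA x u" "set_decode u \<subseteq> B" using RA(2) by blast
      then have "\<forall>i\<in>set_decode u. \<exists>v. RB i v \<and> set_decode v \<subseteq> C" using RB(2) by blast
      then obtain V where V: "\<forall>i\<in>set_decode u. RB i (V i) \<and> set_decode (V i) \<subseteq> C" by metis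
      define w where "w = set_encode (\<Union>i\<in>set_decode u. set_decode (V i))"
      have w: "set_decode w = (\<Union>i\<in>set_decode u. set_decode (V i))" by (simp add: w_def)
      have "?R x w" unfolding w using u(1) V by (intro exI[of _ u]) blast
      moreover have "set_decode w \<subseteq> C" unfolding w using V by blast
      ultimately show "\<exists>w. ?R x w \<and> set_decode w \<subseteq> C" by blast
    next
      assume "\<exists>w. ?R x w \<and> set_decode w \<subseteq> C"
      then obtain w u where w: "set_decode w \<subseteq> C" and u: "RA x u"
        "\<forall>i<u. i \<notin> set_decode u \<or> (\<exists>v. RB i v \<and> (\<forall>j<v. j \<in> set_decode v \<longrightarrow> j \<in> set_decode w))"
        by blast
      have "set_decode u \<subseteq> B"
      proof
        fix i assume "i \<in> set_decode u"
        then obtain v where v: "RB i v" "\<forall>j<v. j \<in> set_decode v \<longrightarrow> j \<in> set_decode w"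
          using u(2) set_decode_less by blast
        then have "set_decode v \<subseteq> C" using w set_decode_less by blast
        then show "i \<in> B" using RB(2) v(1) by blast
      qed
      then show "x \<in> A" using RA(2) u(1) by blast
    qed
  qed
qed

lemma le_e_set_join:
  assumes "le_e A C" "le_e B C" shows "le_e (set_join A B) C"
proof -
  obtain RA where RA: "sigma1 (\<lambda>m. RA (pd1 m) (pd2 m))" "\<And>x. x \<in> A \<longleftrightarrow> (\<exists>u. RA x u \<and> set_decode u \<subseteq> C)"
    using assms(1) unfolding le_e_iff_sigma1 by blast
  obtain RB where RB: "sigma1 (\<lambda>m. RB (pd1 m) (pd2 m))" "\<And>x. x \<in> B \<longleftrightarrow> (\<exists>u. RB x u \<and> set_decode u \<subseteq> C)"
    using assms(2) unfolding le_e_iff_sigma1 by blast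
  show ?thesis
  proof (rule le_e_sigma1I[where R = "\<lambda>x u. (even x \<and> RA (x div 2) u) \<or> (odd x \<and> RB (x div 2) u)"])
    show "sigma1 (\<lambda>m. (even (pd1 m) \<and> RA (pd1 m div 2) (pd2 m)) \<or> (odd (pd1 m) \<and> RB (pd1 m div 2) (pd2 m)))"
      by (intro sigma1_disj sigma1_conj sigma1_prim_rec_pred sigma1_rel2[OF RA(1)] sigma1_rel2[OF RB(1)]
          prim_rec_pred_intros prim_rec_intros)
  qed (auto simp: set_join_iff RA(2) RB(2))
qed

lemma gapp_le_e_set_join: "le_e (gapp A B) (set_join A B)"
proof (rule le_e_sigma1I[where R = "\<lambda>x w. \<exists>u. 2 * prod_encode (x, u) \<in> set_decode w \<and>
    (\<forall>i<u. i \<notin> set_decode u \<or> 2 * i + 1 \<in> set_decode w)"])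
  show "sigma1 (\<lambda>m. \<exists>u. 2 * prod_encode (pd1 m, u) \<in> set_decode (pd2 m) \<and>
      (\<forall>i<u. i \<notin> set_decode u \<or> 2 * i + 1 \<in> set_decode (pd2 m)))"
    by (intro sigma1_intros sigma1_prim_rec_pred prim_rec_pred_intros prim_rec_intros)
  fix x
  show "x \<in> gapp A B \<longleftrightarrow> (\<exists>w. (\<exists>u. 2 * prod_encode (x, u) \<in> set_decode w \<and>
      (\<forall>i<u. i \<notin> set_decode u \<or> 2 * i + 1 \<in> set_decode w)) \<and> set_decode w \<subseteq> set_join A B)"
  proof
    assume "x \<in> gapp A B"
    then obtain u where u: "prod_encode (x, u) \<in> A" "set_decode u \<subseteq> B" by (auto simp: mem_gapp)
    define w where "w = set_encode (insert (2 * prod_encode (x, u)) ((\<lambda>i. 2 * i + 1) ` set_decode u))"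
    have "set_decode w = insert (2 * prod_encode (x, u)) ((\<lambda>i. 2 * i + 1) ` set_decode u)"
      by (simp add: w_def)
    then show "\<exists>w. (\<exists>u. 2 * prod_encode (x, u) \<in> set_decode w \<and>
      (\<forall>i<u. i \<notin> set_decode u \<or> 2 * i + 1 \<in> set_decode w)) \<and> set_decode w \<subseteq> set_join A B"
      using u by (intro exI[of _ w]) (auto simp: set_join_def)
  next
    assume "\<exists>w. (\<exists>u. 2 * prod_encode (x, u) \<in> set_decode w \<and>
      (\<forall>i<u. i \<notin> set_decode u \<or> 2 * i + 1 \<in> set_decode w)) \<and> set_decode w \<subseteq> set_join A B"
    then obtain w u where w: "set_decode w \<subseteq> set_join A B" and u: "2 * prod_encode (x, u) \<in> set_decode w"
      "\<forall>i<u. i \<notin> set_decode u \<or> 2 * i + 1 \<in> set_decode w" by blast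
    have "prod_encode (x, u) \<in> A" using w u(1) by auto
    moreover have "set_decode u \<subseteq> B"
    proof
      fix i assume "i \<in> set_decode u"
      then show "i \<in> B" using u(2) w set_decode_less set_join_odd by blast
    qed
    ultimately show "x \<in> gapp A B" by (auto simp: mem_gapp)
  qed
qed

lemma le_e_gapp: "le_e A C \<Longrightarrow> le_e B C \<Longrightarrow> le_e (gapp A B) C"
  using le_e_trans[OF gapp_le_e_set_join le_e_set_join] .

lemma Gcarrier_iff_le_e: "A \<in> Gcarrier Y \<longleftrightarrow> le_e A Y"
proof
  assume "A \<in> Gcarrier Y"
  then show "le_e A Y" by induction (auto intro: le_e_refl ce_le_e le_e_gapp)
next
  assume "le_e A Y"
  then obtain R where R: "ce_rel R" "\<And>x. x \<in> A \<longleftrightarrow> (\<exists>u. R x u \<and> D u \<subseteq> Y)"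
    unfolding le_e_def by blast
  have "A = gapp {prod_encode (x, u) | x u. R x u} Y" using R(2) by (auto simp: gapp_def)
  moreover have "{prod_encode (x, u) | x u. R x u} \<in> Gcarrier Y"
    using R(1) unfolding ce_rel_def by (rule G_ce)
  ultimately show "A \<in> Gcarrier Y" by (simp add: G_app G_base)
qed

lemma derivable_le_e:
  assumes J: "sigma1 (\<lambda>m. J (pd1 m) (pd1 (pd2 m)) (pd2 (pd2 m)))" and F: "prim_rec F"
  shows "le_e {x. F x \<in> derivable J Og} Og"
proof -
  obtain Z where Z: "sigma1 (\<lambda>m. m \<in> Z)"
    "\<And>Og. derivable J Og = {x. \<exists>u. prod_encode (x, u) \<in> Z \<and> set_decode u \<subseteq> Og}"
    using derivable_sigma1[OF J] by blast
  show ?thesis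
  proof (rule le_e_sigma1I[where R = "\<lambda>x u. prod_encode (F x, u) \<in> Z"])
    show "sigma1 (\<lambda>m. prod_encode (F (pd1 m), pd2 m) \<in> Z)"
      by (intro sigma1_mem[OF Z(1)] prim_rec_prod_encode prim_rec_comp[OF F] prim_rec_fst
        prim_rec_snd prim_rec_id)
  qed (simp add: Z(2))
qed

definition iterate_rule :: "nat \<Rightarrow> nat \<Rightarrow> nat \<Rightarrow> bool" where
  "iterate_rule x w u \<longleftrightarrow>
     (\<exists>k. x = prod_encode (0, k) \<and> 2 * k + 1 \<in> set_decode u) \<or>
     (\<exists>n k v. x = prod_encode (Suc n, k) \<and> 2 * prod_encode (k, v) \<in> set_decode u \<and>
        (\<forall>i<v. i \<notin> set_decode v \<or> prod_encode (n, i) \<in> set_decode w))"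

lemma derivable_iterate_rule:
  "derivable iterate_rule (set_join A B) = {prod_encode (n, k) | n k. k \<in> (gapp A ^^ n) B}"
proof (intro set_eqI iffI)
  fix x assume "x \<in> derivable iterate_rule (set_join A B)"
  then show "x \<in> {prod_encode (n, k) | n k. k \<in> (gapp A ^^ n) B}"
  proof (induction rule: derivable.induct)
    case (derivableI x w u)
    from derivableI.hyps(1) show ?case unfolding iterate_rule_def
    proof (elim disjE exE conjE)
      fix k assume x: "x = prod_encode (0, k)" and "2 * k + 1 \<in> set_decode u"
      then have "k \<in> B" using derivableI.hyps(2) set_join_odd by blast
      then have "k \<in> (gapp A ^^ 0) B" by simp
      then show ?thesis using x by blast
    next
      fix n k v assume x: "x = prod_encode (Suc n, k)" and kv: "2 * prod_encode (k, v) \<in> set_decode u"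
        and v: "\<forall>i<v. i \<notin> set_decode v \<or> prod_encode (n, i) \<in> set_decode w"
      have "prod_encode (k, v) \<in> A" using kv derivableI.hyps(2) set_join_even by blast
      moreover have "set_decode v \<subseteq> (gapp A ^^ n) B"
      proof
        fix i assume "i \<in> set_decode v"
        then have "prod_encode (n, i) \<in> set_decode w" using v set_decode_less by blast
        then show "i \<in> (gapp A ^^ n) B" using derivableI.IH by auto
      qed
      ultimately have "k \<in> (gapp A ^^ Suc n) B" by (auto simp: mem_gapp)
      then show ?thesis using x by blast
    qed
  qed
next
  fix x assume "x \<in> {prod_encode (n, k) | n k. k \<in> (gapp A ^^ n) B}"
  then obtain n k where x: "x = prod_encode (n, k)" and k: "k \<in> (gapp A ^^ n) B" by blast
  have "prod_encode (n, k) \<in> derivable iterate_rule (set_join A B)" using k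
  proof (induction n arbitrary: k)
    case 0
    then have "iterate_rule (prod_encode (0, k)) 0 (set_encode {2 * k + 1})" by (simp add: iterate_rule_def)
    then show ?case by (rule derivableI) (use 0 in \<open>auto simp: set_join_def\<close>)
  next
    case (Suc n)
    then obtain v where v: "prod_encode (k, v) \<in> A" "set_decode v \<subseteq> (gapp A ^^ n) B"
      by (auto simp: mem_gapp)
    let ?w = "set_encode ((\<lambda>i. prod_encode (n, i)) ` set_decode v)"
    have "iterate_rule (prod_encode (Suc n, k)) ?w (set_encode {2 * prod_encode (k, v)})"
      unfolding iterate_rule_def by simp
    then show ?case by (rule derivableI) (use v Suc.IH in \<open>auto simp: set_join_def\<close>)
  qed
  then show "x \<in> derivable iterate_rule (set_join A B)" using x by simp
qed

lemma le_e_iterates: "le_e {prod_encode (n, k) | n k. k \<in> (gapp A ^^ n) B} (set_join A B)"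
proof -
  have "sigma1 (\<lambda>m. iterate_rule (pd1 m) (pd1 (pd2 m)) (pd2 (pd2 m)))"
    unfolding iterate_rule_def by (intro sigma1_intros sigma1_prim_rec_pred prim_rec_pred_intros
      prim_rec_intros)
  from derivable_le_e[OF this prim_rec_id, of "set_join A B"] show ?thesis
    by (simp add: derivable_iterate_rule)
qed

lemma le_e_gapp_section: "le_e {n. m \<in> gapp F {k. prod_encode (n, k) \<in> Q}} (set_join F Q)"
proof (rule le_e_sigma1I[where R = "\<lambda>n w. \<exists>u. 2 * prod_encode (m, u) \<in> set_decode w \<and>
    (\<forall>i<u. i \<notin> set_decode u \<or> 2 * prod_encode (n, i) + 1 \<in> set_decode w)"])
  show "sigma1 (\<lambda>x. \<exists>u. 2 * prod_encode (m, u) \<in> set_decode (pd2 x) \<and>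
      (\<forall>i<u. i \<notin> set_decode u \<or> 2 * prod_encode (pd1 x, i) + 1 \<in> set_decode (pd2 x)))"
    by (intro sigma1_intros sigma1_prim_rec_pred prim_rec_pred_intros prim_rec_intros)
  fix n
  show "n \<in> {n. m \<in> gapp F {k. prod_encode (n, k) \<in> Q}} \<longleftrightarrow> (\<exists>w. (\<exists>u. 2 * prod_encode (m, u) \<in> set_decode w \<and>
      (\<forall>i<u. i \<notin> set_decode u \<or> 2 * prod_encode (n, i) + 1 \<in> set_decode w)) \<and> set_decode w \<subseteq> set_join F Q)"
  proof
    assume "n \<in> {n. m \<in> gapp F {k. prod_encode (n, k) \<in> Q}}"
    then obtain u where u: "prod_encode (m, u) \<in> F" "\<forall>i\<in>set_decode u. prod_encode (n, i) \<in> Q"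
      by (auto simp: mem_gapp)
    define w where "w = set_encode (insert (2 * prod_encode (m, u))
      ((\<lambda>i. 2 * prod_encode (n, i) + 1) ` set_decode u))"
    have "set_decode w = insert (2 * prod_encode (m, u)) ((\<lambda>i. 2 * prod_encode (n, i) + 1) ` set_decode u)"
      by (simp add: w_def)
    then show "\<exists>w. (\<exists>u. 2 * prod_encode (m, u) \<in> set_decode w \<and>
      (\<forall>i<u. i \<notin> set_decode u \<or> 2 * prod_encode (n, i) + 1 \<in> set_decode w)) \<and> set_decode w \<subseteq> set_join F Q"
      using u by (intro exI[of _ w]) (auto simp: set_join_def)
  next
    assume "\<exists>w. (\<exists>u. 2 * prod_encode (m, u) \<in> set_decode w \<and>
      (\<forall>i<u. i \<notin> set_decode u \<or> 2 * prod_encode (n, i) + 1 \<in> set_decode w)) \<and> set_decode w \<subseteq> set_join F Q"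
    then obtain w u where w: "set_decode w \<subseteq> set_join F Q" and u: "2 * prod_encode (m, u) \<in> set_decode w"
      "\<forall>i<u. i \<notin> set_decode u \<or> 2 * prod_encode (n, i) + 1 \<in> set_decode w" by blast
    have "prod_encode (m, u) \<in> F" using w u(1) by auto
    moreover have "\<forall>i\<in>set_decode u. prod_encode (n, i) \<in> Q"
      using u(2) w set_decode_less set_join_odd by blast
    ultimately show "n \<in> {n. m \<in> gapp F {k. prod_encode (n, k) \<in> Q}}" by (auto simp: mem_gapp)
  qed
qed

lemma le_e_gapp_iterates:
  assumes "le_e A Y" "le_e B Y" "le_e F Y"
  shows "le_e {n. m \<in> gapp F ((gapp A ^^ n) B)} Y"
proof -
  let ?Q = "{prod_encode (n, k) | n k. k \<in> (gapp A ^^ n) B}"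
  have "le_e ?Q Y" using le_e_trans[OF le_e_iterates le_e_set_join[OF assms(1,2)]] .
  then have "le_e {n. m \<in> gapp F {k. prod_encode (n, k) \<in> ?Q}} Y"
    using le_e_trans[OF le_e_gapp_section le_e_set_join[OF assms(3)]] by blast
  then show ?thesis by simp
qed

section \<open>Constructing the embedding\<close>

lemma emb_le_e_join_compl:
  assumes "\<phi> \<in> Bcarrier X" shows "le_e (emb \<phi>) (join_compl X)"
proof -
  obtain e0 where "\<phi> = Phi (chi X) e0" using assms unfolding Bcarrier_def by blast
  then have "emb \<phi> = {c. mem_fact 0 c \<in> derivable (emb_rule e0) (join_compl X)}"
    using emb_iff_derivable by blast
  moreover have "prim_rec (mem_fact 0)" unfolding mem_fact_def by (intro prim_rec_intros)
  ultimately show ?thesis using derivable_le_e[OF sigma1_emb_rule] by simp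
qed

theorem pca_embedding_emb:
  assumes "le_e (join_compl X) Y"
  shows "pca_embedding (Bcarrier X) Bapp (Gcarrier Y) Gapp emb"
  unfolding pca_embedding_def
proof (intro conjI ballI allI impI)
  show "emb ` Bcarrier X \<subseteq> Gcarrier Y"
    using le_e_trans[OF emb_le_e_join_compl assms] by (auto simp: Gcarrier_iff_le_e)
  show "inj_on emb (Bcarrier X)" by (auto intro: inj_onI emb_inject)
  fix a b c assume "Bapp a b = Some c"
  then show "Gapp (emb a) (emb b) = Some (emb c)" by (simp add: Bapp_eq Gapp_def gapp_emb)
qed

section \<open>Extracting the reduction from an embedding\<close>

definition chi_fun :: "nat set \<Rightarrow> nat \<Rightarrow> nat" where
  "chi_fun X a = (if a \<in> X then 1 else 0)"

lemma chi_eq_chi_fun: "chi X = (\<lambda>a. Some (chi_fun X a))"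
  by (simp add: chi_def chi_fun_def fun_eq_iff)

lemma Bcarrier_prog: "prog_wf t 1 \<Longrightarrow> (\<lambda>n. Some (prog_eval (chi_fun X) t [n])) \<in> Bcarrier X"
  unfolding Bcarrier_def chi_eq_chi_fun using Phi_prog_code[of t "chi_fun X"]
  by (auto intro!: exI[of _ "prog_code t"])

lemma Bcarrier_const: "(\<lambda>n. Some c) \<in> Bcarrier X"
  using Bcarrier_prog[of "const_prog c" X] by simp

text \<open>Applied to total constant functions, a program runs with oracle pjoin \<phi> \<psi>, which holds
  \<psi> 0 at position 1 and \<phi> k at position 2 k. So succ_prog computes \<psi> 0 + 1, select_prog computes
  \<phi> (\<psi> 0 + 1), and chi_prog, whose value at 0 is the code of select_prog, applied to the constant n
  returns its own value at n + 1, namely chi_fun X n.\<close>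

definition "succ_prog = Cm Sc [Cm Orc [const_prog 1]]"
definition "select_prog = Cm Orc [Cm add_prog [succ_prog, succ_prog]]"
definition "chi_prog = Rc (const_prog (prog_code select_prog)) (Cm Orc [Pj 0])"
definition "co_chi_prog = Rc (const_prog (prog_code select_prog))
  (Cm diff_prog [const_prog 1, Cm Orc [Pj 0]])"

lemma prog_wf_succ_prog[simp]: "prog_wf succ_prog k" by (simp add: succ_prog_def)
lemma prog_wf_select_prog[simp]: "prog_wf select_prog k" by (simp add: select_prog_def)
lemma prog_wf_chi_prog: "prog_wf chi_prog 1" by (simp add: chi_prog_def)
lemma prog_wf_co_chi_prog: "prog_wf co_chi_prog 1" by (simp add: co_chi_prog_def)

lemma eval_succ_prog[simp]: "prog_eval og succ_prog xs = Suc (og 1)" by (simp add: succ_prog_def)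
lemma eval_select_prog[simp]: "prog_eval og select_prog xs = og (Suc (og 1) + Suc (og 1))"
  by (simp add: select_prog_def)
lemma eval_chi_prog: "prog_eval og chi_prog [k] = (case k of 0 \<Rightarrow> prog_code select_prog | Suc i \<Rightarrow> og i)"
  by (cases k) (simp_all add: chi_prog_def)
lemma eval_co_chi_prog:
  "prog_eval og co_chi_prog [k] = (case k of 0 \<Rightarrow> prog_code select_prog | Suc i \<Rightarrow> 1 - og i)"
  by (cases k) (simp_all add: co_chi_prog_def)

lemma Phi_total: "prog_wf t 1 \<Longrightarrow> f = (\<lambda>a. Some (g a))
  \<Longrightarrow> Phi f (prog_code t) = (\<lambda>n. Some (prog_eval g t [n]))"
  using Phi_prog_code by simp

lemma pjoin_total:
  "pjoin (\<lambda>k. Some (F k)) (\<lambda>k. Some (G k)) = (\<lambda>q. Some (if even q then F (q div 2) else G (q div 2)))"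
  by (simp add: pjoin_def fun_eq_iff)

lemma bapp_succ_prog: "bapp (\<lambda>k. Some (prog_code succ_prog)) (\<lambda>k. Some n) = (\<lambda>k. Some (Suc n))"
  unfolding bapp_def pjoin_total by (simp add: Phi_total[OF prog_wf_succ_prog refl])

lemma bapp_chi_prog:
  "bapp (\<lambda>k. Some (prog_eval (chi_fun X) chi_prog [k])) (\<lambda>k. Some n) = (\<lambda>k. Some (chi_fun X n))"
proof -
  have "prog_eval (chi_fun X) chi_prog [0] = prog_code select_prog" by (simp add: eval_chi_prog)
  then show ?thesis unfolding bapp_def pjoin_total
    by (simp add: Phi_total[OF prog_wf_select_prog refl] eval_chi_prog)
qed

lemma bapp_co_chi_prog:
  "bapp (\<lambda>k. Some (prog_eval (chi_fun X) co_chi_prog [k])) (\<lambda>k. Some n) = (\<lambda>k. Some (1 - chi_fun X n))"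
proof -
  have "prog_eval (chi_fun X) co_chi_prog [0] = prog_code select_prog" by (simp add: eval_co_chi_prog)
  then show ?thesis unfolding bapp_def pjoin_total
    by (simp add: Phi_total[OF prog_wf_select_prog refl] eval_co_chi_prog)
qed

lemma pca_embeddingD:
  assumes "pca_embedding (Bcarrier X) Bapp (Gcarrier Y) Gapp f"
  shows "a \<in> Bcarrier X \<Longrightarrow> le_e (f a) Y" and "inj_on f (Bcarrier X)"
    and "a \<in> Bcarrier X \<Longrightarrow> b \<in> Bcarrier X \<Longrightarrow> gapp (f a) (f b) = f (bapp a b)"
  using assms unfolding pca_embedding_def Gcarrier_iff_le_e[symmetric] by (auto simp: Bapp_eq Gapp_def)

lemma le_e_of_pca_embedding:
  assumes emb: "pca_embedding (Bcarrier X) Bapp (Gcarrier Y) Gapp f"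
  shows "le_e X Y \<and> le_e (- X) Y"
proof -
  note inB = pca_embeddingD(1)[OF emb] and inj = pca_embeddingD(2)[OF emb]
    and app = pca_embeddingD(3)[OF emb]
  define num where "num n = (\<lambda>k::nat. Some (n::nat))" for n
  define succ where "succ = (\<lambda>k::nat. Some (prog_code succ_prog))"
  define t1 where "t1 = (\<lambda>k. Some (prog_eval (chi_fun X) chi_prog [k]))"
  define t2 where "t2 = (\<lambda>k. Some (prog_eval (chi_fun X) co_chi_prog [k]))"
  have B: "num n \<in> Bcarrier X" "succ \<in> Bcarrier X" "t1 \<in> Bcarrier X" "t2 \<in> Bcarrier X" for n
    unfolding num_def succ_def t1_def t2_def
    by (auto intro: Bcarrier_const Bcarrier_prog prog_wf_chi_prog prog_wf_co_chi_prog)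
  have "f (num (Suc n)) = gapp (f succ) (f (num n))" for n
    using app[OF B(2,1)] by (simp add: succ_def num_def bapp_succ_prog)
  then have iter: "f (num n) = (gapp (f succ) ^^ n) (f (num 0))" for n
    by (induction n) simp_all
  have "gapp (f t1) (f (num n)) = f (num (chi_fun X n))"
    "gapp (f t2) (f (num n)) = f (num (1 - chi_fun X n))" for n
    using app[OF B(3) B(1)] app[OF B(4) B(1)] bapp_chi_prog bapp_co_chi_prog
    by (simp_all add: t1_def t2_def num_def)
  then have t12: "m \<in> gapp (f t1) ((gapp (f succ) ^^ n) (f (num 0))) \<longleftrightarrow> m \<in> f (num (chi_fun X n))"
    "m \<in> gapp (f t2) ((gapp (f succ) ^^ n) (f (num 0))) \<longleftrightarrow> m \<in> f (num (1 - chi_fun X n))" for m n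
    by (simp_all flip: iter)
  have "num 1 \<noteq> num 0" by (simp add: num_def fun_eq_iff)
  then obtain m where m: "m \<in> f (num 1) \<longleftrightarrow> m \<notin> f (num 0)" using inj B(1) by (meson inj_on_eq_iff set_eqI)
  have "le_e {n. m \<in> gapp (f t) ((gapp (f succ) ^^ n) (f (num 0)))} Y" if "t \<in> {t1, t2}" for t
    using that B by (auto intro!: le_e_gapp_iterates inB)
  moreover have "{n. m \<in> gapp (f t1) ((gapp (f succ) ^^ n) (f (num 0)))} =
    (if m \<in> f (num 1) then X else - X)"
    "{n. m \<in> gapp (f t2) ((gapp (f succ) ^^ n) (f (num 0)))} = (if m \<in> f (num 1) then - X else X)"
    using m by (auto simp: t12 chi_fun_def)
  ultimately show ?thesis by (metis insertCI)
qed

theorem theorem7p6: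
  fixes X Y :: "nat set"
  shows "(\<exists>f. pca_embedding (Bcarrier X) Bapp (Gcarrier Y) Gapp f) \<longleftrightarrow> le_e (join_compl X) Y"
proof
  assume "\<exists>f. pca_embedding (Bcarrier X) Bapp (Gcarrier Y) Gapp f"
  then have "le_e X Y" "le_e (- X) Y" using le_e_of_pca_embedding by blast+
  then show "le_e (join_compl X) Y" unfolding join_compl_eq_set_join by (rule le_e_set_join)
next
  assume "le_e (join_compl X) Y"
  then show "\<exists>f. pca_embedding (Bcarrier X) Bapp (Gcarrier Y) Gapp f" using pca_embedding_emb by blast
qed

end
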